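(* Let $\epsilon>0$ and let $(Q,K)$, $c(K)$ and $Y=t\,c'(K)\partial_Q-\partial_K$ be as described in the context. Let $\bar f(t,Q,K)$ be a solution of $$\partial_t\bar f - c(K)\,\partial_Q\bar f = 0$$ on $[0,\infty)\times(\mathbb{R}/2\pi\mathbb{Z})\times(0,\infty)$, whose initial data, expressed in $(x,v)$ variables as $f_0(x,v)=\bar f(0,Q,K)$, is smooth, nonnegative, and satisfies $\mathrm{supp}(f_0)\subseteq\{(x,v): c_s\leq \frac{v^2}{2}+\Phi(x)\leq c_s^{-1}\}$ for some $c_s>0$. Then $$\sup_{(t,Q,K)\in[0,\infty)\times\mathbb{T}^1\times[c_s,c_s^{-1}]}\ \sum_{\ell\leq 2}|Y^\ell\bar f|(t,Q,K)\lesssim \sup_{(x,v)\in\mathbb{R}\times\mathbb{R}}\ \sum_{|\alpha|+|\beta|\leq 2}|\partial_x^\alpha\partial_v^\beta f_0|(x,v),$$ where the implicit constant depends only on $\epsilon$ and $c_s$.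
   Context: Let $\Phi(x)=\frac{x^2}{2}+\frac{\epsilon x^4}{2}$ and $H(x,v)=\frac{v^2}{2}+\Phi(x)$. For $(x,v)\neq(0,0)$ define the angle $\chi\in\mathbb{R}/2\pi\mathbb{Z}$ by $\chi=\arcsin\big(v/\sqrt{2H}\big)$ if $x>0$ and $\chi=\pi-\arcsin\big(v/\sqrt{2H}\big)$ if $x\leq 0$; then $(x,v)\mapsto(\chi,H)$ is a bijection onto $(\mathbb{R}/2\pi\mathbb{Z})\times(0,\infty)$, and we write $x=x(\chi,H)$. Set $a(\chi,H)=\sqrt{2}\,\frac{1+2\epsilon x^2}{\sqrt{1+\epsilon x^2}}$ with $x=x(\chi,H)$. Define $c(H)>0$ by $c(H)\int_0^{2\pi}\frac{\mathrm{d}\chi}{a(\chi,H)}=2\pi$, and $Q(\chi,H)=c(H)\int_0^{\chi}\frac{\mathrm{d}\chi'}{a(\chi',H)}$ (well defined modulo $2\pi$), $K=H$. $\mathbb{T}^1=\mathbb{R}/2\pi\mathbb{Z}$. Partial derivatives $\partial_Q,\partial_K$ are taken in the coordinates $(t,Q,K)$. *)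

theory Defs
  imports "HOL-Analysis.Analysis"
begin

definition Phi :: "real \<Rightarrow> real \<Rightarrow> real" where
  "Phi eps x = x^2 / 2 + eps * x^4 / 2"

definition Ham :: "real \<Rightarrow> real \<Rightarrow> real \<Rightarrow> real" where
  "Ham eps x v = v^2 / 2 + Phi eps x"

text \<open>The angle chi, as a real representative (taken modulo 2 pi).\<close>
definition chi :: "real \<Rightarrow> real \<Rightarrow> real \<Rightarrow> real" where
  "chi eps x v = (if x > 0 then arcsin (v / sqrt (2 * Ham eps x v))
                  else pi - arcsin (v / sqrt (2 * Ham eps x v)))"

definition xco :: "real \<Rightarrow> real \<Rightarrow> real \<Rightarrow> real" where
  "xco eps ch H = (THE x. \<exists>v. (x, v) \<noteq> (0, 0) \<and> Ham eps x v = H \<and>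
                       (\<exists>k::int. chi eps x v = ch + 2 * pi * of_int k))"

definition acoef :: "real \<Rightarrow> real \<Rightarrow> real \<Rightarrow> real" where
  "acoef eps ch H = sqrt 2 * (1 + 2 * eps * (xco eps ch H)^2) / sqrt (1 + eps * (xco eps ch H)^2)"

definition cfun :: "real \<Rightarrow> real \<Rightarrow> real" where
  "cfun eps H = 2 * pi / (LBINT ch = 0..2 * pi. 1 / acoef eps ch H)"

text \<open>Q(chi,H) = c(H) int_0^chi 1/a (signed interval integral), meaningful modulo 2 pi.\<close>
definition Qfun :: "real \<Rightarrow> real \<Rightarrow> real \<Rightarrow> real" where
  "Qfun eps ch H = cfun eps H * (LBINT ch' = 0..ch. 1 / acoef eps ch' H)"

definition Qxv :: "real \<Rightarrow> real \<Rightarrow> real \<Rightarrow> real" where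
  "Qxv eps x v = Qfun eps (chi eps x v) (Ham eps x v)"

definition Yop :: "real \<Rightarrow> (real \<Rightarrow> real \<Rightarrow> real \<Rightarrow> real) \<Rightarrow> (real \<Rightarrow> real \<Rightarrow> real \<Rightarrow> real)" where
  "Yop eps f = (\<lambda>t q k. t * deriv (cfun eps) k * deriv (\<lambda>q'. f t q' k) q
                         - deriv (\<lambda>k'. f t q k') k)"

definition pdx :: "(real \<Rightarrow> real \<Rightarrow> real) \<Rightarrow> real \<Rightarrow> real \<Rightarrow> real" where
  "pdx f = (\<lambda>x v. deriv (\<lambda>y. f y v) x)"

definition pdv :: "(real \<Rightarrow> real \<Rightarrow> real) \<Rightarrow> real \<Rightarrow> real \<Rightarrow> real" where
  "pdv f = (\<lambda>x v. deriv (\<lambda>w. f x w) v)"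

fun iter_pd :: "bool list \<Rightarrow> (real \<Rightarrow> real \<Rightarrow> real) \<Rightarrow> real \<Rightarrow> real \<Rightarrow> real" where
  "iter_pd [] f = f"
| "iter_pd (b # bs) f = (if b then pdx else pdv) (iter_pd bs f)"

definition smooth2 :: "(real \<Rightarrow> real \<Rightarrow> real) \<Rightarrow> bool" where
  "smooth2 f \<longleftrightarrow> (\<forall>ops p. (\<lambda>(x, v). iter_pd ops f x v) differentiable (at p))"

end

theory Submission
  imports Defs
begin

text \<open>On each energy shell the coordinates (chi, K) can be inverted explicitly, and Q is the angle
  chi reparametrised so that the flow moves it at the constant speed c(K); hence the solution is
  transported, fbar(t, Q, K) = f0 evaluated at the point with coordinates (Q + c(K) t, K). The field
  Y = t c'(K) d/dQ - d/dK is designed so that its t-dependent part cancels the K-dependence of the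
  phase Q + c(K) t: Y fbar is minus the K-derivative at fixed Q of f0 in the coordinates (chi, K),
  transported in the same way. By the chain rule, Y fbar and Y^2 fbar are bounded by M times a
  weight built from the K-derivatives at fixed Q of x and v. The weight is continuous and
  2 pi-periodic in chi, hence bounded on the shells cs \<le> K \<le> 1/cs.\<close>

section \<open>Partial derivatives on the plane\<close>

definition partial_fst :: "(real \<times> real \<Rightarrow> real) \<Rightarrow> real \<times> real \<Rightarrow> real" where
  "partial_fst F p = frechet_derivative F (at p) (1, 0)"

definition partial_snd :: "(real \<times> real \<Rightarrow> real) \<Rightarrow> real \<times> real \<Rightarrow> real" where
  "partial_snd F p = frechet_derivative F (at p) (0, 1)"

definition C1_on :: "(real \<times> real) set \<Rightarrow> (real \<times> real \<Rightarrow> real) \<Rightarrow> bool" where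
  "C1_on S F \<longleftrightarrow> (\<forall>p\<in>S. F differentiable at p) \<and>
     continuous_on S (partial_fst F) \<and> continuous_on S (partial_snd F)"

definition C2_on :: "(real \<times> real) set \<Rightarrow> (real \<times> real \<Rightarrow> real) \<Rightarrow> bool" where
  "C2_on S F \<longleftrightarrow> C1_on S F \<and> C1_on S (partial_fst F) \<and> C1_on S (partial_snd F)"

lemma has_derivative_partials:
  assumes "F differentiable at p"
  shows "(F has_derivative (\<lambda>h. partial_fst F p * fst h + partial_snd F p * snd h)) (at p)"
proof -
  let ?D = "frechet_derivative F (at p)"
  have lin: "linear ?D" using assms by (rule linear_frechet_derivative)
  have "?D h = partial_fst F p * fst h + partial_snd F p * snd h" for h
  proof -
    have "h = fst h *\<^sub>R (1, 0) + snd h *\<^sub>R (0, 1)" by (simp add: prod_eq_iff)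
    then have "?D h = ?D (fst h *\<^sub>R (1, 0) + snd h *\<^sub>R (0, 1))" by (rule arg_cong)
    also have "\<dots> = fst h * ?D (1, 0) + snd h * ?D (0, 1)"
      unfolding linear_add[OF lin] linear_scale[OF lin] by simp
    finally show ?thesis unfolding partial_fst_def partial_snd_def by (simp add: mult.commute)
  qed
  then have "?D = (\<lambda>h. partial_fst F p * fst h + partial_snd F p * snd h)" by auto
  then show ?thesis using assms frechet_derivative_works by metis
qed

lemma partials_eqI:
  assumes "(F has_derivative (\<lambda>h. A * fst h + B * snd h)) (at p)"
  shows "partial_fst F p = A" "partial_snd F p = B"
proof -
  have "frechet_derivative F (at p) = (\<lambda>h. A * fst h + B * snd h)"
    using frechet_derivative_at[OF assms] by simp
  then show "partial_fst F p = A" "partial_snd F p = B"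
    unfolding partial_fst_def partial_snd_def by auto
qed

lemma has_real_derivative_fst_slice:
  assumes "(F has_derivative (\<lambda>h. A * fst h + B * snd h)) (at (x, v))"
  shows "((\<lambda>y. F (y, v)) has_real_derivative A) (at x)"
proof -
  have "((\<lambda>y. F (y, v)) has_derivative (\<lambda>d. A * fst (d, 0::real) + B * snd (d, 0::real))) (at x)"
    using has_derivative_compose[OF has_derivative_Pair[OF has_derivative_ident has_derivative_const] assms] .
  then show ?thesis by (simp add: has_field_derivative_def)
qed

lemma has_real_derivative_snd_slice:
  assumes "(F has_derivative (\<lambda>h. A * fst h + B * snd h)) (at (x, v))"
  shows "((\<lambda>w. F (x, w)) has_real_derivative B) (at v)"
proof -
  have "((\<lambda>w. F (x, w)) has_derivative (\<lambda>d. A * fst (0::real, d) + B * snd (0::real, d))) (at v)"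
    using has_derivative_compose[OF has_derivative_Pair[OF has_derivative_const has_derivative_ident] assms] .
  then show ?thesis by (simp add: has_field_derivative_def)
qed

lemma partials_cong:
  assumes "open S" "p \<in> S" "\<And>x. x \<in> S \<Longrightarrow> F x = G x"
  shows "partial_fst F p = partial_fst G p" "partial_snd F p = partial_snd G p"
proof -
  have "(F has_derivative D) (at p) \<longleftrightarrow> (G has_derivative D) (at p)" for D
    using assms has_derivative_transform_within_open[of F D p UNIV S G]
      has_derivative_transform_within_open[of G D p UNIV S F] by auto
  then have "frechet_derivative F (at p) = frechet_derivative G (at p)"
    unfolding frechet_derivative_def by simp
  then show "partial_fst F p = partial_fst G p" "partial_snd F p = partial_snd G p"
    unfolding partial_fst_def partial_snd_def by auto
qed

lemma C1_onI:
  assumes D: "\<And>p. p \<in> S \<Longrightarrow> (F has_derivative (\<lambda>h. A p * fst h + B p * snd h)) (at p)"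
    and "continuous_on S A" "continuous_on S B"
  shows "C1_on S F"
proof -
  have "continuous_on S (partial_fst F) = continuous_on S A"
    "continuous_on S (partial_snd F) = continuous_on S B"
    by (rule continuous_on_cong; simp add: partials_eqI[OF D])+
  then show ?thesis using assms unfolding C1_on_def differentiable_def by blast
qed

lemma C1_on_has_derivative:
  "C1_on S F \<Longrightarrow> p \<in> S \<Longrightarrow>
     (F has_derivative (\<lambda>h. partial_fst F p * fst h + partial_snd F p * snd h)) (at p)"
  unfolding C1_on_def using has_derivative_partials by blast

lemma C1_on_imp_continuous_on: "C1_on S F \<Longrightarrow> continuous_on S F"
  unfolding C1_on_def
  by (meson continuous_at_imp_continuous_on differentiable_imp_continuous_within)

lemma C1_on_partials_continuous:
  "C1_on S F \<Longrightarrow> continuous_on S (partial_fst F)" "C1_on S F \<Longrightarrow> continuous_on S (partial_snd F)"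
  unfolding C1_on_def by auto

lemma C2_on_imp_C1_on:
  "C2_on S F \<Longrightarrow> C1_on S F" "C2_on S F \<Longrightarrow> C1_on S (partial_fst F)" "C2_on S F \<Longrightarrow> C1_on S (partial_snd F)"
  unfolding C2_on_def by auto

lemma C1_on_cong:
  assumes "open S" "C1_on S F" "\<And>x. x \<in> S \<Longrightarrow> F x = G x"
  shows "C1_on S G"
proof (rule C1_onI)
  fix p assume "p \<in> S"
  then show "(G has_derivative (\<lambda>h. partial_fst F p * fst h + partial_snd F p * snd h)) (at p)"
    using has_derivative_transform_within_open[OF C1_on_has_derivative[OF assms(2)] assms(1)] assms(3)
    by auto
qed (use assms(2) C1_on_partials_continuous in auto)

lemma C2_onI:
  assumes "open S" "C1_on S F" "C1_on S A" "C1_on S B"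
    and "\<And>p. p \<in> S \<Longrightarrow> partial_fst F p = A p" "\<And>p. p \<in> S \<Longrightarrow> partial_snd F p = B p"
  shows "C2_on S F"
  unfolding C2_on_def using assms C1_on_cong[OF assms(1)] by metis

lemma partials_const: "partial_fst (\<lambda>p. c) p = 0" "partial_snd (\<lambda>p. c) p = 0"
  by (auto intro!: partials_eqI derivative_eq_intros)

lemma C1_on_const: "C1_on S (\<lambda>p. c)"
  by (rule C1_onI[where A="\<lambda>_. 0" and B="\<lambda>_. 0"]) (auto intro!: derivative_eq_intros)

lemma C2_on_const: "open S \<Longrightarrow> C2_on S (\<lambda>p. c)"
  by (rule C2_onI[where A="\<lambda>_. 0" and B="\<lambda>_. 0"]) (auto simp: partials_const C1_on_const)

lemma has_derivative_fst_partials: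
  "((fst :: real \<times> real \<Rightarrow> real) has_derivative (\<lambda>h. 1 * fst h + 0 * snd h)) (at p)"
  by (auto intro!: derivative_eq_intros)

lemma has_derivative_snd_partials:
  "((snd :: real \<times> real \<Rightarrow> real) has_derivative (\<lambda>h. 0 * fst h + 1 * snd h)) (at p)"
  by (auto intro!: derivative_eq_intros)

lemma C2_on_fst: "open S \<Longrightarrow> C2_on S fst"
  by (rule C2_onI[where A="\<lambda>_. 1" and B="\<lambda>_. 0"])
    (auto simp: partials_eqI[OF has_derivative_fst_partials] C1_on_const
      intro!: C1_onI[OF has_derivative_fst_partials])

lemma C2_on_snd: "open S \<Longrightarrow> C2_on S snd"
  by (rule C2_onI[where A="\<lambda>_. 0" and B="\<lambda>_. 1"])
    (auto simp: partials_eqI[OF has_derivative_snd_partials] C1_on_const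
      intro!: C1_onI[OF has_derivative_snd_partials])

lemma C1_on_add:
  assumes "C1_on S F" "C1_on S G"
  shows "C1_on S (\<lambda>x. F x + G x)"
    and "p \<in> S \<Longrightarrow> partial_fst (\<lambda>x. F x + G x) p = partial_fst F p + partial_fst G p"
    and "p \<in> S \<Longrightarrow> partial_snd (\<lambda>x. F x + G x) p = partial_snd F p + partial_snd G p"
proof -
  have D: "((\<lambda>x. F x + G x) has_derivative (\<lambda>h. (partial_fst F p + partial_fst G p) * fst h
      + (partial_snd F p + partial_snd G p) * snd h)) (at p)" if "p \<in> S" for p
    by (rule has_derivative_eq_rhs[OF has_derivative_add[OF C1_on_has_derivative[OF assms(1) that]
          C1_on_has_derivative[OF assms(2) that]]]) (simp add: fun_eq_iff algebra_simps)
  show "C1_on S (\<lambda>x. F x + G x)"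
    by (rule C1_onI[OF D]) (use assms in \<open>auto intro!: continuous_intros C1_on_partials_continuous\<close>)
  show "p \<in> S \<Longrightarrow> partial_fst (\<lambda>x. F x + G x) p = partial_fst F p + partial_fst G p"
    "p \<in> S \<Longrightarrow> partial_snd (\<lambda>x. F x + G x) p = partial_snd F p + partial_snd G p"
    using partials_eqI[OF D] by auto
qed

lemma C1_on_uminus:
  assumes "C1_on S F"
  shows "C1_on S (\<lambda>x. - F x)"
    and "p \<in> S \<Longrightarrow> partial_fst (\<lambda>x. - F x) p = - partial_fst F p"
    and "p \<in> S \<Longrightarrow> partial_snd (\<lambda>x. - F x) p = - partial_snd F p"
proof -
  have D': "((\<lambda>x. - F x) has_derivative (\<lambda>h. - partial_fst F p * fst h + - partial_snd F p * snd h)) (at p)"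
    if "p \<in> S" for p
    by (rule has_derivative_eq_rhs[OF has_derivative_minus[OF C1_on_has_derivative[OF assms that]]])
      (simp add: fun_eq_iff algebra_simps)
  show "C1_on S (\<lambda>x. - F x)"
    by (rule C1_onI[OF D']) (use assms in \<open>auto intro!: continuous_intros C1_on_partials_continuous\<close>)
  show "p \<in> S \<Longrightarrow> partial_fst (\<lambda>x. - F x) p = - partial_fst F p"
    "p \<in> S \<Longrightarrow> partial_snd (\<lambda>x. - F x) p = - partial_snd F p"
    using partials_eqI[OF D'] by auto
qed

lemma C1_on_mult:
  assumes "C1_on S F" "C1_on S G"
  shows "C1_on S (\<lambda>x. F x * G x)"
    and "p \<in> S \<Longrightarrow> partial_fst (\<lambda>x. F x * G x) p = partial_fst F p * G p + F p * partial_fst G p"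
    and "p \<in> S \<Longrightarrow> partial_snd (\<lambda>x. F x * G x) p = partial_snd F p * G p + F p * partial_snd G p"
proof -
  have D: "((\<lambda>x. F x * G x) has_derivative (\<lambda>h. (partial_fst F p * G p + F p * partial_fst G p) * fst h
      + (partial_snd F p * G p + F p * partial_snd G p) * snd h)) (at p)" if "p \<in> S" for p
    by (rule has_derivative_eq_rhs[OF has_derivative_mult[OF C1_on_has_derivative[OF assms(1) that]
          C1_on_has_derivative[OF assms(2) that]]]) (simp add: fun_eq_iff algebra_simps)
  show "C1_on S (\<lambda>x. F x * G x)"
    by (rule C1_onI[OF D])
      (use assms C1_on_imp_continuous_on in \<open>auto intro!: continuous_intros C1_on_partials_continuous\<close>)
  show "p \<in> S \<Longrightarrow> partial_fst (\<lambda>x. F x * G x) p = partial_fst F p * G p + F p * partial_fst G p"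
    "p \<in> S \<Longrightarrow> partial_snd (\<lambda>x. F x * G x) p = partial_snd F p * G p + F p * partial_snd G p"
    using partials_eqI[OF D] by auto
qed

lemma C1_on_compose:
  assumes F: "C1_on T F" and U: "C1_on S U" and W: "C1_on S W" and UW: "\<And>p. p \<in> S \<Longrightarrow> (U p, W p) \<in> T"
  shows "C1_on S (\<lambda>p. F (U p, W p))"
    and "p \<in> S \<Longrightarrow> partial_fst (\<lambda>p. F (U p, W p)) p
      = partial_fst F (U p, W p) * partial_fst U p + partial_snd F (U p, W p) * partial_fst W p"
    and "p \<in> S \<Longrightarrow> partial_snd (\<lambda>p. F (U p, W p)) p
      = partial_fst F (U p, W p) * partial_snd U p + partial_snd F (U p, W p) * partial_snd W p"
proof -
  have D: "((\<lambda>p. F (U p, W p)) has_derivative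
      (\<lambda>h. (partial_fst F (U p, W p) * partial_fst U p + partial_snd F (U p, W p) * partial_fst W p) * fst h
         + (partial_fst F (U p, W p) * partial_snd U p + partial_snd F (U p, W p) * partial_snd W p) * snd h))
      (at p)" if p: "p \<in> S" for p
  proof -
    have "((\<lambda>p. (U p, W p)) has_derivative (\<lambda>h. (partial_fst U p * fst h + partial_snd U p * snd h,
        partial_fst W p * fst h + partial_snd W p * snd h))) (at p)"
      by (rule has_derivative_Pair; rule C1_on_has_derivative) (use U W p in auto)
    from has_derivative_compose[OF this C1_on_has_derivative[OF F UW[OF p]]]
    show ?thesis by (rule has_derivative_eq_rhs) (auto simp: algebra_simps)
  qed
  have "continuous_on S (\<lambda>p. (U p, W p))"
    using U W by (intro continuous_intros C1_on_imp_continuous_on)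
  moreover have "(\<lambda>p. (U p, W p)) ` S \<subseteq> T" using UW by auto
  ultimately have "continuous_on S (\<lambda>p. partial_fst F (U p, W p))" "continuous_on S (\<lambda>p. partial_snd F (U p, W p))"
    using continuous_on_compose2[OF C1_on_partials_continuous(1)[OF F]]
      continuous_on_compose2[OF C1_on_partials_continuous(2)[OF F]] by auto
  then show "C1_on S (\<lambda>p. F (U p, W p))"
    by (intro C1_onI[OF D]) (use U W in \<open>auto intro!: continuous_intros C1_on_partials_continuous\<close>)
  show "p \<in> S \<Longrightarrow> partial_fst (\<lambda>p. F (U p, W p)) p
      = partial_fst F (U p, W p) * partial_fst U p + partial_snd F (U p, W p) * partial_fst W p"
    "p \<in> S \<Longrightarrow> partial_snd (\<lambda>p. F (U p, W p)) p
      = partial_fst F (U p, W p) * partial_snd U p + partial_snd F (U p, W p) * partial_snd W p"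
    using partials_eqI[OF D] by auto
qed

lemma C1_on_real_fun:
  assumes d: "\<And>x. x \<in> T \<Longrightarrow> (\<phi> has_real_derivative \<phi>' x) (at x)" and c: "continuous_on T \<phi>'"
  shows "C1_on (T \<times> UNIV) (\<lambda>q. \<phi> (fst q))"
    and "q \<in> T \<times> UNIV \<Longrightarrow> partial_fst (\<lambda>q. \<phi> (fst q)) q = \<phi>' (fst q)"
    and "q \<in> T \<times> UNIV \<Longrightarrow> partial_snd (\<lambda>q. \<phi> (fst q)) q = 0"
proof -
  have D: "((\<lambda>q. \<phi> (fst q)) has_derivative (\<lambda>h. \<phi>' (fst q) * fst h + 0 * snd h)) (at q)"
    if "q \<in> T \<times> UNIV" for q
    using has_derivative_compose[OF has_derivative_fst[OF has_derivative_ident], of \<phi> "(*) (\<phi>' (fst q))"]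
      d[of "fst q"] that by (auto simp: has_field_derivative_def mult.commute)
  show "C1_on (T \<times> UNIV) (\<lambda>q. \<phi> (fst q))"
    by (rule C1_onI[OF D]) (auto intro!: continuous_on_compose2[OF c] continuous_intros)
  show "q \<in> T \<times> UNIV \<Longrightarrow> partial_fst (\<lambda>q. \<phi> (fst q)) q = \<phi>' (fst q)"
    "q \<in> T \<times> UNIV \<Longrightarrow> partial_snd (\<lambda>q. \<phi> (fst q)) q = 0"
    using partials_eqI[OF D] by auto
qed

lemma C2_on_real_fun:
  assumes T: "open T"
    and d: "\<And>x. x \<in> T \<Longrightarrow> (\<phi> has_real_derivative \<phi>' x) (at x)"
    and d': "\<And>x. x \<in> T \<Longrightarrow> (\<phi>' has_real_derivative \<phi>'' x) (at x)"
    and c: "continuous_on T \<phi>''"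
  shows "C2_on (T \<times> UNIV) (\<lambda>q. \<phi> (fst q))"
proof -
  have "continuous_on T \<phi>'"
    using d' by (meson DERIV_isCont continuous_at_imp_continuous_on)
  note \<phi> = C1_on_real_fun[OF d this] and \<phi>' = C1_on_real_fun[OF d' c]
  show ?thesis
    by (rule C2_onI[OF open_Times[OF T open_UNIV] \<phi>(1) \<phi>'(1) C1_on_const[of _ 0]]) (use \<phi> in auto)
qed

lemma C2_on_add:
  assumes "open S" "C2_on S F" "C2_on S G"
  shows "C2_on S (\<lambda>x. F x + G x)"
proof -
  have F: "C1_on S F" "C1_on S (partial_fst F)" "C1_on S (partial_snd F)"
    and G: "C1_on S G" "C1_on S (partial_fst G)" "C1_on S (partial_snd G)"
    using assms unfolding C2_on_def by auto
  show ?thesis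
    by (rule C2_onI[OF assms(1) C1_on_add(1)[OF F(1) G(1)]])
      (auto intro!: C1_on_add F G simp: C1_on_add(2,3)[OF F(1) G(1)])
qed

lemma C2_on_mult:
  assumes "open S" "C2_on S F" "C2_on S G"
  shows "C2_on S (\<lambda>x. F x * G x)"
proof -
  have F: "C1_on S F" "C1_on S (partial_fst F)" "C1_on S (partial_snd F)"
    and G: "C1_on S G" "C1_on S (partial_fst G)" "C1_on S (partial_snd G)"
    using assms unfolding C2_on_def by auto
  show ?thesis
    by (rule C2_onI[OF assms(1) C1_on_mult(1)[OF F(1) G(1)]])
      (auto intro!: C1_on_add C1_on_mult F G simp: C1_on_mult(2,3)[OF F(1) G(1)])
qed

lemma C2_on_compose:
  assumes S: "open S" and F: "C2_on T F" and U: "C2_on S U" and W: "C2_on S W"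
    and UW: "\<And>p. p \<in> S \<Longrightarrow> (U p, W p) \<in> T"
  shows "C2_on S (\<lambda>p. F (U p, W p))"
proof -
  have F': "C1_on T F" "C1_on T (partial_fst F)" "C1_on T (partial_snd F)"
    and U': "C1_on S U" "C1_on S (partial_fst U)" "C1_on S (partial_snd U)"
    and W': "C1_on S W" "C1_on S (partial_fst W)" "C1_on S (partial_snd W)"
    using F U W unfolding C2_on_def by auto
  have "C1_on S (\<lambda>p. partial_fst F (U p, W p))" "C1_on S (\<lambda>p. partial_snd F (U p, W p))"
    using C1_on_compose(1)[OF F'(2) U'(1) W'(1) UW] C1_on_compose(1)[OF F'(3) U'(1) W'(1) UW] by auto
  then show ?thesis
    by (intro C2_onI[OF S C1_on_compose(1)[OF F'(1) U'(1) W'(1) UW]])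
      (auto intro!: C1_on_add C1_on_mult U' W' simp: C1_on_compose(2,3)[OF F'(1) U'(1) W'(1) UW])
qed

lemma C2_on_compose_real:
  assumes "open S" "open T"
    and "\<And>x. x \<in> T \<Longrightarrow> (\<phi> has_real_derivative \<phi>' x) (at x)"
    and "\<And>x. x \<in> T \<Longrightarrow> (\<phi>' has_real_derivative \<phi>'' x) (at x)"
    and "continuous_on T \<phi>''" "C2_on S F" "\<And>p. p \<in> S \<Longrightarrow> F p \<in> T"
  shows "C2_on S (\<lambda>p. \<phi> (F p))"
  using C2_on_compose[OF assms(1) C2_on_real_fun[OF assms(2-5)] assms(6) assms(6)] assms(7) by auto

lemma C2_on_power2: "open S \<Longrightarrow> C2_on S F \<Longrightarrow> C2_on S (\<lambda>p. F p ^ 2)"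
  using C2_on_mult[of S F F] by (simp add: power2_eq_square)

lemma C2_on_inverse:
  assumes "open S" "C2_on S F" "\<And>p. p \<in> S \<Longrightarrow> F p > 0"
  shows "C2_on S (\<lambda>p. 1 / F p)"
proof (rule C2_on_compose_real[OF assms(1) open_greaterThan _ _ _ assms(2)])
  fix x :: real assume "x \<in> {0<..}"
  then show "((\<lambda>x. 1 / x) has_real_derivative - 1 / x^2) (at x)"
    and "((\<lambda>x. - 1 / x^2) has_real_derivative 2 / x^3) (at x)"
    by (auto intro!: derivative_eq_intros simp: field_simps power2_eq_square power3_eq_cube)
qed (use assms(3) in \<open>auto intro!: continuous_intros\<close>)

lemma C2_on_divide:
  assumes "open S" "C2_on S F" "C2_on S G" "\<And>p. p \<in> S \<Longrightarrow> G p > 0"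
  shows "C2_on S (\<lambda>p. F p / G p)"
  using C2_on_mult[OF assms(1,2) C2_on_inverse[OF assms(1,3,4)]] by simp

lemma C2_on_sqrt:
  assumes "open S" "C2_on S F" "\<And>p. p \<in> S \<Longrightarrow> F p > 0"
  shows "C2_on S (\<lambda>p. sqrt (F p))"
proof (rule C2_on_compose_real[OF assms(1) open_greaterThan _ _ _ assms(2)])
  fix x :: real assume "x \<in> {0<..}"
  then show "(sqrt has_real_derivative 1 / (2 * sqrt x)) (at x)"
    and "((\<lambda>x. 1 / (2 * sqrt x)) has_real_derivative - 1 / (4 * x * sqrt x)) (at x)"
    by (auto intro!: derivative_eq_intros simp: field_simps)
qed (use assms(3) in \<open>auto intro!: continuous_intros\<close>)

lemma C2_on_cos: "open S \<Longrightarrow> C2_on S F \<Longrightarrow> C2_on S (\<lambda>p. cos (F p))"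
  by (rule C2_on_compose_real[OF _ open_UNIV, where \<phi>'="\<lambda>x. - sin x" and \<phi>''="\<lambda>x. - cos x"])
     (auto intro!: derivative_eq_intros continuous_intros)

lemma C2_on_sin: "open S \<Longrightarrow> C2_on S F \<Longrightarrow> C2_on S (\<lambda>p. sin (F p))"
  by (rule C2_on_compose_real[OF _ open_UNIV, where \<phi>'="cos" and \<phi>''="\<lambda>x. - sin x"])
     (auto intro!: derivative_eq_intros continuous_intros)

lemma C1_on_inverse:
  assumes "C1_on S F" "\<And>p. p \<in> S \<Longrightarrow> F p > 0"
  shows "C1_on S (\<lambda>p. 1 / F p)"
proof -
  have "((\<lambda>x. 1 / x) has_real_derivative - 1 / x^2) (at x)" if "x \<in> {0<..}" for x :: real
    using that by (auto intro!: derivative_eq_intros simp: field_simps power2_eq_square)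
  then have "C1_on ({0<..} \<times> UNIV) (\<lambda>q. 1 / fst q)"
    by (rule C1_on_real_fun(1)) (auto intro!: continuous_intros)
  from C1_on_compose(1)[OF this assms(1) assms(1)] show ?thesis using assms(2) by auto
qed

section \<open>Reduction modulo the period\<close>

lemma quasi_periodic_int_shift:
  fixes f :: "real \<Rightarrow> real"
  assumes "\<And>x. f (x + p) = f x + d"
  shows "f (x + p * of_int m) = f x + d * of_int m"
proof -
  have nat: "f (x + p * real n) = f x + d * real n" for x n
  proof (induction n)
    case (Suc n)
    have "f (x + p * real (Suc n)) = f ((x + p * real n) + p)" by (simp add: algebra_simps)
    also have "\<dots> = f (x + p * real n) + d" by (rule assms)
    finally show ?case using Suc by (simp add: algebra_simps)
  qed simp
  show ?thesis
  proof (cases "m \<ge> 0")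
    case True
    then show ?thesis using nat[of x "nat m"] by simp
  next
    case False
    then show ?thesis using nat[of "x + p * of_int m" "nat (- m)"] by (simp add: algebra_simps)
  qed
qed

lemma periodic_int_shift:
  fixes f :: "real \<Rightarrow> real"
  assumes "\<And>x. f (x + p) = f x"
  shows "f (x + p * of_int m) = f x"
  using quasi_periodic_int_shift[of f p 0] assms by simp

lemma period_representative:
  fixes x a p :: real
  assumes "p > 0"
  obtains m :: int where "a \<le> x + p * of_int m" "x + p * of_int m < a + p"
proof -
  define n where "n = \<lfloor>(x - a) / p\<rfloor>"
  have "of_int n \<le> (x - a) / p" "(x - a) / p < of_int n + 1" unfolding n_def by linarith+
  then have "of_int n * p \<le> x - a" "x - a < (of_int n + 1) * p"
    using assms by (simp_all add: field_simps)
  then show ?thesis by (intro that[of "- n"]) (auto simp: algebra_simps)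
qed

lemma arcsin_sin_cos_pos:
  assumes "cos x > 0"
  shows "\<exists>m::int. arcsin (sin x) = x + 2 * pi * of_int m"
proof -
  obtain m :: int where b: "- pi \<le> x + 2 * pi * of_int m" "x + 2 * pi * of_int m < pi"
    using period_representative[of "2 * pi" "- pi" x] by auto
  define y where "y = x + 2 * pi * of_int m"
  have cy: "cos y > 0" "sin y = sin x"
    unfolding y_def using assms by (simp_all add: sin_add cos_add)
  have "y < pi / 2"
  proof (rule ccontr)
    assume "\<not> y < pi / 2"
    then have "cos y \<le> cos (pi / 2)" using b unfolding y_def by (intro cos_monotone_0_pi_le) auto
    then show False using cy by simp
  qed
  moreover have "- (pi / 2) < y"
  proof (rule ccontr)
    assume "\<not> - (pi / 2) < y"
    then have "cos y \<le> cos (- (pi / 2))" using b unfolding y_def by (intro cos_monotone_minus_pi_0') auto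
    then show False using cy by simp
  qed
  ultimately have "arcsin (sin x) = y" using arcsin_sin[of y] cy by simp
  then show ?thesis unfolding y_def by blast
qed

lemma arcsin_sin_cos_nonpos:
  assumes "cos x \<le> 0"
  shows "\<exists>m::int. pi - arcsin (sin x) = x + 2 * pi * of_int m"
proof -
  obtain m :: int where b: "0 \<le> x + 2 * pi * of_int m" "x + 2 * pi * of_int m < 2 * pi"
    using period_representative[of "2 * pi" 0 x] by auto
  define y where "y = x + 2 * pi * of_int m"
  have cy: "cos y \<le> 0" "sin y = sin x"
    unfolding y_def using assms by (simp_all add: sin_add cos_add)
  have "pi / 2 \<le> y"
  proof (rule ccontr)
    assume "\<not> pi / 2 \<le> y"
    then have "cos y > 0" using b unfolding y_def by (intro cos_gt_zero_pi) auto
    then show False using cy by simp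
  qed
  moreover have "y \<le> 3 * pi / 2"
  proof (rule ccontr)
    assume "\<not> y \<le> 3 * pi / 2"
    then have "cos (y - 2 * pi) > 0" using b unfolding y_def by (intro cos_gt_zero_pi) auto
    then show False using cy by (simp add: cos_diff)
  qed
  ultimately have "arcsin (sin y) = pi - y" using arcsin_sin[of "pi - y"] by simp
  then have "pi - arcsin (sin x) = y" using cy by simp
  then show ?thesis unfolding y_def by blast
qed

section \<open>The inverse of the coordinates (chi, K)\<close>

lemma Phi_nonneg: "e \<ge> 0 \<Longrightarrow> Phi e x \<ge> 0"
  unfolding Phi_def by (auto intro!: add_nonneg_nonneg)

lemma Ham_pos:
  assumes "e > 0" "(x, v) \<noteq> (0, 0)"
  shows "Ham e x v > 0"
proof (cases "x = 0")
  case True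
  then have "v \<noteq> 0" using assms(2) by simp
  then show ?thesis using True by (simp add: Ham_def Phi_def)
next
  case False
  then have "Phi e x > 0" using assms(1) by (simp add: Phi_def add_pos_nonneg)
  then show ?thesis by (simp add: Ham_def add_nonneg_pos)
qed

definition half_plane :: "(real \<times> real) set" where
  "half_plane = UNIV \<times> {0<..}"

lemma open_half_plane: "open half_plane"
  unfolding half_plane_def by (intro open_Times) auto

lemma mem_half_plane [simp]: "(c, k) \<in> half_plane \<longleftrightarrow> k > 0"
  unfolding half_plane_def by simp

text \<open>Points of the half plane are pairs (chi, K). On the energy shell, Phi x = K cos^2 chi is a
  quadratic equation in x^2, and the root of its discriminant is disc_root = 1 + 2 eps x^2.\<close>

definition disc_root :: "real \<Rightarrow> real \<times> real \<Rightarrow> real" where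
  "disc_root e p = sqrt (1 + 8 * e * snd p * (cos (fst p))^2)"

definition x_of :: "real \<Rightarrow> real \<times> real \<Rightarrow> real" where
  "x_of e p = 2 * cos (fst p) * sqrt (snd p) / sqrt (1 + disc_root e p)"

definition v_of :: "real \<times> real \<Rightarrow> real" where
  "v_of p = sqrt (2 * snd p) * sin (fst p)"

definition inv_a :: "real \<Rightarrow> real \<times> real \<Rightarrow> real" where
  "inv_a e p = sqrt (disc_root e p + 1) / (2 * disc_root e p)"

lemma disc_root_ge_1: "e > 0 \<Longrightarrow> p \<in> half_plane \<Longrightarrow> disc_root e p \<ge> 1"
  unfolding disc_root_def half_plane_def by auto

lemma disc_root_sq: "e > 0 \<Longrightarrow> k > 0 \<Longrightarrow> (disc_root e (c, k))^2 = 1 + 8 * e * k * (cos c)^2"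
  unfolding disc_root_def by (simp add: add_nonneg_nonneg)

lemma inv_a_pos: "e > 0 \<Longrightarrow> p \<in> half_plane \<Longrightarrow> inv_a e p > 0"
  using disc_root_ge_1[of e p] unfolding inv_a_def by force

lemma C2_on_disc_root: "e > 0 \<Longrightarrow> C2_on half_plane (disc_root e)"
  unfolding disc_root_def[abs_def]
  by (intro C2_on_sqrt C2_on_add C2_on_mult C2_on_power2 C2_on_cos C2_on_const C2_on_fst C2_on_snd
      open_half_plane) (auto simp: half_plane_def intro!: add_pos_nonneg)

lemma C2_on_inv_a: "e > 0 \<Longrightarrow> C2_on half_plane (inv_a e)"
  unfolding inv_a_def[abs_def]
  by (intro C2_on_divide C2_on_sqrt C2_on_add C2_on_mult C2_on_const C2_on_disc_root open_half_plane)
     (auto dest: disc_root_ge_1[of e])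

lemma C2_on_x_of: "e > 0 \<Longrightarrow> C2_on half_plane (x_of e)"
  unfolding x_of_def[abs_def]
  by (intro C2_on_divide C2_on_sqrt C2_on_add C2_on_mult C2_on_const C2_on_disc_root C2_on_cos
      C2_on_fst C2_on_snd open_half_plane)
     (auto dest: disc_root_ge_1[of e])

lemma C2_on_v_of: "C2_on half_plane v_of"
  unfolding v_of_def[abs_def]
  by (intro C2_on_sqrt C2_on_mult C2_on_const C2_on_sin C2_on_fst C2_on_snd open_half_plane)
     (auto simp: half_plane_def)

lemma x_of_int_shift: "x_of e (c + 2 * pi * of_int m, k) = x_of e (c, k)"
  unfolding x_of_def disc_root_def by (simp add: cos_add)

lemma v_of_int_shift: "v_of (c + 2 * pi * of_int m, k) = v_of (c, k)"
  unfolding v_of_def by (simp add: sin_add)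

lemma inv_a_int_shift: "inv_a e (c + 2 * pi * of_int m, k) = inv_a e (c, k)"
  unfolding inv_a_def disc_root_def by (simp add: cos_add)

lemma x_of_sq:
  assumes e: "e > 0" and k: "k > 0"
  shows "(x_of e (c, k))^2 = (disc_root e (c, k) - 1) / (2 * e)"
proof -
  let ?s = "disc_root e (c, k)"
  have s1: "?s \<ge> 1" using disc_root_ge_1[of e "(c, k)"] e k by auto
  have "(x_of e (c, k))^2 = 4 * (cos c)^2 * k / (1 + ?s)"
    unfolding x_of_def using k s1 by (simp add: power_divide power_mult_distrib)
  also have "\<dots> = (2 * e * (4 * (cos c)^2 * k)) / (2 * e * (1 + ?s))"
    by (rule mult_divide_mult_cancel_left[symmetric]) (use e in simp)
  also have "\<dots> = (?s^2 - 1) / (2 * e * (1 + ?s))"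
    using disc_root_sq[OF e k] by (simp add: algebra_simps)
  also have "\<dots> = ((1 + ?s) * (?s - 1)) / ((1 + ?s) * (2 * e))"
    by (simp add: algebra_simps power2_eq_square)
  also have "\<dots> = (?s - 1) / (2 * e)"
    using s1 by simp
  finally show ?thesis .
qed

lemma Ham_x_of_v_of:
  assumes e: "e > 0" and k: "k > 0"
  shows "Ham e (x_of e (c, k)) (v_of (c, k)) = k"
proof -
  let ?s = "disc_root e (c, k)"
  have X2: "(x_of e (c, k))^2 = (?s - 1) / (2 * e)" using x_of_sq[OF e k] .
  have X4: "(x_of e (c, k))^4 = ((?s - 1) / (2 * e))^2"
    using X2 by (metis power2_eq_square power4_eq_xxxx mult.assoc)
  have "Phi e (x_of e (c, k)) = (?s^2 - 1) / (8 * e)"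
    unfolding Phi_def X2 X4 using e by (simp add: field_simps power2_eq_square)
  also have "\<dots> = k * (cos c)^2" using disc_root_sq[OF e k] e by (simp add: field_simps)
  finally have "Phi e (x_of e (c, k)) = k * (cos c)^2" .
  moreover have "(v_of (c, k))^2 / 2 = k * (sin c)^2"
    unfolding v_of_def using k by (simp add: power_mult_distrib)
  ultimately show ?thesis
    unfolding Ham_def by (metis distrib_left mult.right_neutral sin_cos_squared_add)
qed

lemma x_of_eq_cos_mult:
  assumes "e > 0" "k > 0"
  obtains r where "r > 0" "x_of e (c, k) = cos c * r"
proof
  show "2 * sqrt k / sqrt (1 + disc_root e (c, k)) > 0"
    using assms disc_root_ge_1[of e "(c, k)"] by simp
qed (simp add: x_of_def)

lemma x_of_v_of_nonzero:
  assumes e: "e > 0" and k: "k > 0"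
  shows "(x_of e (c, k), v_of (c, k)) \<noteq> (0, 0)"
proof
  assume h: "(x_of e (c, k), v_of (c, k)) = (0, 0)"
  then have "sin c = 0" unfolding v_of_def using k by simp
  moreover obtain r where "r > 0" "x_of e (c, k) = cos c * r" using x_of_eq_cos_mult[OF e k] .
  then have "cos c = 0" using h by simp
  ultimately show False using sin_cos_squared_add[of c] by simp
qed

lemma chi_x_of_v_of:
  assumes e: "e > 0" and k: "k > 0"
  shows "\<exists>m::int. chi e (x_of e (c, k)) (v_of (c, k)) = c + 2 * pi * of_int m"
proof -
  have H: "Ham e (x_of e (c, k)) (v_of (c, k)) = k" using Ham_x_of_v_of[OF e k] .
  have u: "v_of (c, k) / sqrt (2 * k) = sin c"
    unfolding v_of_def using k by simp
  obtain r where r: "r > 0" "x_of e (c, k) = cos c * r" using x_of_eq_cos_mult[OF e k] .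
  show ?thesis
  proof (cases "cos c > 0")
    case True
    then have "chi e (x_of e (c, k)) (v_of (c, k)) = arcsin (sin c)"
      unfolding chi_def H u using r by simp
    then show ?thesis using arcsin_sin_cos_pos[OF True] by simp
  next
    case False
    then have "\<not> x_of e (c, k) > 0" using r by (simp add: mult_nonpos_nonneg not_less)
    then have "chi e (x_of e (c, k)) (v_of (c, k)) = pi - arcsin (sin c)"
      unfolding chi_def H u by simp
    then show ?thesis using arcsin_sin_cos_nonpos[of c] False by simp
  qed
qed

lemma cos_chi:
  assumes e: "e > 0" and nz: "(x, v) \<noteq> (0, 0)"
  shows "(cos (chi e x v))^2 = Phi e x / Ham e x v"
    and "x > 0 \<Longrightarrow> cos (chi e x v) \<ge> 0"
    and "x \<le> 0 \<Longrightarrow> cos (chi e x v) \<le> 0"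
proof -
  define H where "H = Ham e x v"
  define u where "u = v / sqrt (2 * H)"
  have H0: "H > 0" unfolding H_def using Ham_pos[OF e nz] .
  have u2: "u^2 = v^2 / (2 * H)" unfolding u_def using H0 by (simp add: power_divide)
  have vH: "2 * H - v^2 = 2 * Phi e x" unfolding H_def Ham_def by simp
  have "1 - u^2 = (2 * H - v^2) / (2 * H)" unfolding u2 using H0 by (simp add: field_simps)
  then have 1: "1 - u^2 = Phi e x / H" unfolding vH by simp
  then have nn: "0 \<le> 1 - u^2" using Phi_nonneg[of e x] e H0 by simp
  then have ub: "-1 \<le> u" "u \<le> 1" by (auto simp: abs_square_le_1 abs_le_iff)
  have costh: "cos (chi e x v) = (if x > 0 then sqrt (1 - u^2) else - sqrt (1 - u^2))"
    unfolding chi_def u_def[symmetric] H_def[symmetric] using cos_arcsin[OF ub] by simp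
  show "(cos (chi e x v))^2 = Phi e x / Ham e x v"
    using costh 1 real_sqrt_pow2[OF nn] unfolding H_def by (simp add: power2_minus)
  show "x > 0 \<Longrightarrow> cos (chi e x v) \<ge> 0" "x \<le> 0 \<Longrightarrow> cos (chi e x v) \<le> 0"
    using costh nn by auto
qed

lemma x_of_chi_Ham:
  assumes e: "e > 0" and nz: "(x, v) \<noteq> (0, 0)"
  shows "x_of e (chi e x v, Ham e x v) = x"
proof -
  define th where "th = chi e x v"
  define H where "H = Ham e x v"
  have H0: "H > 0" unfolding H_def using Ham_pos[OF e nz] .
  have "(disc_root e (th, H))^2 = 1 + 8 * e * Phi e x"
    using disc_root_sq[OF e H0] cos_chi(1)[OF e nz] H0 unfolding th_def H_def by simp
  also have "\<dots> = (1 + 2 * e * x^2)^2"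
    unfolding Phi_def by (simp add: power2_eq_square field_simps power4_eq_xxxx)
  finally have "disc_root e (th, H) = 1 + 2 * e * x^2"
    using e disc_root_ge_1[OF e, of "(th, H)"] H0 by (simp add: power2_eq_iff_nonneg add_nonneg_nonneg)
  then have sq: "(x_of e (th, H))^2 = x^2" using x_of_sq[OF e H0] e by simp
  obtain r where r: "r > 0" "x_of e (th, H) = cos th * r" using x_of_eq_cos_mult[OF e H0] .
  show ?thesis
  proof (cases "x > 0")
    case True
    then have "x_of e (th, H) \<ge> 0" using r cos_chi(2)[OF e nz] unfolding th_def by simp
    then show ?thesis using sq True power2_eq_imp_eq unfolding th_def H_def by fastforce
  next
    case False
    then have "x_of e (th, H) \<le> 0" using r cos_chi(3)[OF e nz] unfolding th_def
      by (simp add: mult_nonpos_nonneg)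
    then show ?thesis using sq False power2_eq_iff unfolding th_def H_def by fastforce
  qed
qed

lemma xco_eq:
  assumes e: "e > 0" and k: "k > 0"
  shows "xco e c k = x_of e (c, k)"
  unfolding xco_def
proof (rule the_equality)
  obtain m :: int where "chi e (x_of e (c, k)) (v_of (c, k)) = c + 2 * pi * of_int m"
    using chi_x_of_v_of[OF e k] by blast
  then show "\<exists>v. (x_of e (c, k), v) \<noteq> (0, 0) \<and> Ham e (x_of e (c, k)) v = k \<and>
      (\<exists>m::int. chi e (x_of e (c, k)) v = c + 2 * pi * of_int m)"
    using x_of_v_of_nonzero[OF e k] Ham_x_of_v_of[OF e k] by blast
next
  fix x assume "\<exists>v. (x, v) \<noteq> (0, 0) \<and> Ham e x v = k \<and> (\<exists>m::int. chi e x v = c + 2 * pi * of_int m)"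
  then obtain v m where h: "(x, v) \<noteq> (0, 0)" "Ham e x v = k" "chi e x v = c + 2 * pi * of_int (m::int)"
    by blast
  have "x = x_of e (chi e x v, Ham e x v)" using x_of_chi_Ham[OF e h(1)] by simp
  also have "\<dots> = x_of e (c, k)" unfolding h(2,3) x_of_int_shift ..
  finally show "x = x_of e (c, k)" .
qed

lemma inv_acoef_eq:
  assumes e: "e > 0" and k: "k > 0"
  shows "1 / acoef e c k = inv_a e (c, k)"
proof -
  let ?s = "disc_root e (c, k)"
  have X2: "(xco e c k)^2 = (?s - 1) / (2 * e)" using x_of_sq[OF e k] xco_eq[OF e k] by simp
  have a: "1 + 2 * e * (xco e c k)^2 = ?s" and b: "1 + e * (xco e c k)^2 = (1 + ?s) / 2"
    using X2 e by (simp_all add: field_simps)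
  have "1 / acoef e c k = sqrt ((1 + ?s) / 2) / (sqrt 2 * ?s)"
    unfolding acoef_def a b by simp
  also have "\<dots> = sqrt (1 + ?s) / (2 * ?s)"
    by (simp add: real_sqrt_divide field_simps)
  finally show ?thesis unfolding inv_a_def by (simp add: add.commute)
qed

section \<open>Primitives depending on a parameter\<close>

definition primitive_fst :: "(real \<times> real \<Rightarrow> real) \<Rightarrow> real \<times> real \<Rightarrow> real" where
  "primitive_fst h p = (LBINT t = 0..fst p. h (t, snd p))"

lemma continuous_on_slice:
  assumes "continuous_on half_plane h" "k > 0"
  shows "continuous_on A (\<lambda>t. h (t, k))"
  by (rule continuous_on_compose2[OF assms(1)]) (use assms(2) in \<open>auto intro!: continuous_intros\<close>)

lemma primitive_fst_eq_integral:
  assumes h: "continuous_on half_plane h" and k: "k > 0"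
  shows "primitive_fst h (c, k) =
    (if 0 \<le> c then integral {0..c} (\<lambda>t. h (t, k)) else - integral {c..0} (\<lambda>t. h (t, k)))"
proof -
  have I: "(LBINT t = ereal a..ereal b. h (t, k)) = integral {a..b} (\<lambda>t. h (t, k))" if "a \<le> b" for a b
    by (rule interval_integral_eq_integral[OF that borel_integrable_atLeastAtMost'[OF continuous_on_slice[OF h k]]])
  show ?thesis
  proof (cases "0 \<le> c")
    case True
    then show ?thesis using I[OF True] by (simp add: primitive_fst_def zero_ereal_def)
  next
    case False
    then show ?thesis
      using I[of c 0] interval_integral_endpoints_reverse[of "ereal 0" "ereal c" "\<lambda>t. h (t, k)"]
      by (simp add: primitive_fst_def zero_ereal_def)
  qed
qed

lemma has_real_derivative_primitive_fst:
  assumes h: "continuous_on half_plane h" and k: "k > 0"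
  shows "((\<lambda>c. primitive_fst h (c, k)) has_real_derivative h (c, k)) (at c)"
proof -
  define L where "L = \<bar>c\<bar> + 1"
  have "((\<lambda>u. LBINT y=ereal 0..u. h (y, k)) has_vector_derivative h (c, k)) (at c within {-L..L})"
    by (rule interval_integral_FTC2[where f="\<lambda>y. h (y, k)" and a="-L" and b=L and c=0])
       (use continuous_on_slice[OF h k] in \<open>auto simp: L_def\<close>)
  then have "((\<lambda>u. LBINT y=0..u. h (y, k)) has_vector_derivative h (c, k)) (at c within {-L..L})"
    by (simp add: zero_ereal_def)
  moreover have "c \<in> interior {-L..L}" unfolding L_def by auto
  ultimately have "((\<lambda>u. LBINT y=0..u. h (y, k)) has_vector_derivative h (c, k)) (at c)"
    by (simp only: at_within_interior)
  then show ?thesis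
    unfolding primitive_fst_def has_real_derivative_iff_has_vector_derivative by simp
qed

lemma primitive_fst_rescale:
  assumes h: "continuous_on half_plane h" and k: "k > 0"
  shows "primitive_fst h (c, k) = c * integral {0..1} (\<lambda>u. h (c * u, k))"
proof -
  have "(LBINT u=0..1. c *\<^sub>R h (c * u, k)) = (LBINT y=(c * 0)..(c * 1). h (y, k))"
    using interval_integral_substitution_finite[of 0 1 "\<lambda>u. c * u" "\<lambda>_. c" "\<lambda>y. h (y, k)"]
    by (auto intro!: derivative_eq_intros continuous_intros continuous_on_slice[OF h k]
        simp: zero_ereal_def one_ereal_def)
  then have "primitive_fst h (c, k) = c * (LBINT u=0..1. h (c * u, k))"
    unfolding primitive_fst_def by (simp add: zero_ereal_def)
  also have "(LBINT u=0..1. h (c * u, k)) = integral {0..1} (\<lambda>u. h (c * u, k))"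
  proof -
    have "continuous_on {0..1} (\<lambda>u. h (c * u, k))"
      by (rule continuous_on_compose2[OF h]) (use k in \<open>auto intro!: continuous_intros\<close>)
    from interval_integral_eq_integral[OF _ borel_integrable_atLeastAtMost'[OF this]]
    show ?thesis by (simp add: zero_ereal_def one_ereal_def)
  qed
  finally show ?thesis .
qed

lemma continuous_on_primitive_fst:
  assumes h: "continuous_on half_plane h"
  shows "continuous_on half_plane (primitive_fst h)"
proof -
  have "continuous_on half_plane (\<lambda>p. integral (cbox 0 1) (\<lambda>u. h (fst p * u, snd p)))"
  proof (rule integral_continuous_on_param)
    have "continuous_on (half_plane \<times> cbox 0 1) (\<lambda>x. h (fst (fst x) * snd x, snd (fst x)))"
      by (rule continuous_on_compose2[OF h]) (auto simp: half_plane_def intro!: continuous_intros)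
    then show "continuous_on (half_plane \<times> cbox 0 1) (\<lambda>(p, u). h (fst p * u, snd p))"
      by (simp add: split_beta')
  qed
  then have "continuous_on half_plane (\<lambda>p. fst p * integral {0..1} (\<lambda>u. h (fst p * u, snd p)))"
    by (auto simp: cbox_interval intro!: continuous_intros)
  moreover have "fst p * integral {0..1} (\<lambda>u. h (fst p * u, snd p)) = primitive_fst h p"
    if "p \<in> half_plane" for p
    using primitive_fst_rescale[OF h] that by (auto simp: half_plane_def)
  ultimately show ?thesis by (rule continuous_on_eq)
qed

lemma has_real_derivative_integral_param:
  assumes h: "C1_on half_plane h" and k: "k > 0"
  shows "((\<lambda>k. integral {a..b} (\<lambda>t. h (t, k))) has_real_derivative
    integral {a..b} (\<lambda>t. partial_snd h (t, k))) (at k)"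
proof -
  have "((\<lambda>k. integral (cbox a b) (\<lambda>t. h (t, k))) has_field_derivative
      integral (cbox a b) (\<lambda>t. partial_snd h (t, k))) (at k within {0<..})"
  proof (rule leibniz_rule_field_derivative)
    fix x t :: real assume "x \<in> {0<..}"
    then have "(t, x) \<in> half_plane" by simp
    from has_real_derivative_snd_slice[OF C1_on_has_derivative[OF h this]]
    show "((\<lambda>x. h (t, x)) has_field_derivative partial_snd h (t, x)) (at x within {0<..})"
      by (rule has_field_derivative_at_within)
  next
    fix x :: real assume "x \<in> {0<..}"
    then show "(\<lambda>t. h (t, x)) integrable_on cbox a b"
      using continuous_on_slice[OF C1_on_imp_continuous_on[OF h]]
      by (auto simp: cbox_interval intro!: integrable_continuous_interval)
  next
    have "continuous_on ({0<..} \<times> cbox a b) (\<lambda>x. partial_snd h (snd x, fst x))"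
      by (rule continuous_on_compose2[OF C1_on_partials_continuous(2)[OF h]])
        (auto simp: half_plane_def intro!: continuous_intros)
    then show "continuous_on ({0<..} \<times> cbox a b) (\<lambda>(x, t). partial_snd h (t, x))"
      by (simp add: split_beta')
  qed (use k in auto)
  moreover have "at k within {0<..} = at k" using k by (intro at_within_open) auto
  ultimately show ?thesis unfolding cbox_interval by simp
qed

lemma has_real_derivative_primitive_fst_snd:
  assumes h: "C1_on half_plane h" and k: "k > 0"
  shows "((\<lambda>k. primitive_fst h (c, k)) has_real_derivative primitive_fst (partial_snd h) (c, k)) (at k)"
proof -
  define I where "I g k = (if 0 \<le> c then integral {0..c} (\<lambda>t. g (t, k)) else - integral {c..0} (\<lambda>t. g (t, k)))"
    for g :: "real \<times> real \<Rightarrow> real" and k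
  have hc: "continuous_on half_plane h" "continuous_on half_plane (partial_snd h)"
    using C1_on_imp_continuous_on[OF h] C1_on_partials_continuous(2)[OF h] .
  have "(I h has_real_derivative I (partial_snd h) k) (at k)"
    unfolding I_def using has_real_derivative_integral_param[OF h k] by (cases "0 \<le> c") (auto intro: DERIV_minus)
  then show ?thesis
    unfolding primitive_fst_eq_integral[OF hc(2) k] I_def[symmetric]
    by (rule has_field_derivative_transform_within_open[where S="{0<..}"])
      (use k primitive_fst_eq_integral[OF hc(1)] in \<open>auto simp: I_def\<close>)
qed

lemma has_derivative_primitive_fst:
  assumes h: "C1_on half_plane h" and p: "p \<in> half_plane"
  shows "(primitive_fst h has_derivative (\<lambda>d. h p * fst d + primitive_fst (partial_snd h) p * snd d)) (at p)"
proof -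
  obtain c k where pck: "p = (c, k)" and k: "k > 0" using p by (cases p) auto
  have hc: "continuous_on half_plane h" using C1_on_imp_continuous_on[OF h] .
  have "continuous_on ({0<..} \<times> UNIV) (\<lambda>x. h (snd x, fst x))"
    by (rule continuous_on_compose2[OF hc]) (auto simp: half_plane_def intro!: continuous_intros)
  then have "continuous_on ({0<..} \<times> UNIV) (\<lambda>x. blinfun_mult_right (h (snd x, fst x)))"
    using continuous_on_compose2[OF linear_continuous_on[OF bounded_linear_blinfun_mult_right]] by blast
  then have cont: "continuous_on ({0<..} \<times> UNIV) (\<lambda>(k, c). blinfun_mult_right (h (c, k)))"
    by (simp add: split_beta')
  have "((\<lambda>(k, c). primitive_fst h (c, k)) has_derivative
      (\<lambda>(dk, dc). primitive_fst (partial_snd h) (c, k) * dk + blinfun_mult_right (h (c, k)) dc))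
      (at (k, c) within {0<..} \<times> UNIV)"
  proof (rule has_derivative_partialsI[where fy="\<lambda>k c. blinfun_mult_right (h (c, k))"])
    show "((\<lambda>k. primitive_fst h (c, k)) has_derivative (*) (primitive_fst (partial_snd h) (c, k)))
        (at k within {0<..})"
      using has_real_derivative_primitive_fst_snd[OF h k]
      by (auto simp: has_field_derivative_def intro: has_derivative_at_withinI)
    fix k' c' :: real assume "k' \<in> {0<..}"
    then show "((\<lambda>c. primitive_fst h (c, k')) has_derivative blinfun_mult_right (h (c', k'))) (at c' within UNIV)"
      using has_real_derivative_primitive_fst[OF hc, of k' c'] by (auto simp: has_field_derivative_def)
  next
    show "continuous (at (k, c) within {0<..} \<times> UNIV) (\<lambda>(k, c). blinfun_mult_right (h (c, k)))"
      using cont k by (simp add: continuous_on_eq_continuous_within)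
  qed auto
  then have swapped: "((\<lambda>(k, c). primitive_fst h (c, k)) has_derivative
      (\<lambda>(dk, dc). primitive_fst (partial_snd h) (c, k) * dk + h (c, k) * dc)) (at (k, c))"
    using k by (subst (asm) at_within_open) (auto intro!: open_Times)
  have "((\<lambda>p. (\<lambda>(k, c). primitive_fst h (c, k)) (snd p, fst p)) has_derivative
      (\<lambda>d. (\<lambda>(dk, dc). primitive_fst (partial_snd h) (c, k) * dk + h (c, k) * dc) (snd d, fst d))) (at p)"
    by (rule has_derivative_compose[of "\<lambda>p. (snd p, fst p)" _ _ _ "\<lambda>(k, c). primitive_fst h (c, k)"])
      (auto intro!: derivative_eq_intros simp: pck swapped)
  then show ?thesis by (simp add: pck algebra_simps)
qed

lemma C1_on_primitive_fst:
  assumes h: "C1_on half_plane h"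
  shows "C1_on half_plane (primitive_fst h)"
    and "p \<in> half_plane \<Longrightarrow> partial_fst (primitive_fst h) p = h p"
    and "p \<in> half_plane \<Longrightarrow> partial_snd (primitive_fst h) p = primitive_fst (partial_snd h) p"
proof -
  note D = has_derivative_primitive_fst[OF h]
  show "C1_on half_plane (primitive_fst h)"
    by (rule C1_onI[OF D C1_on_imp_continuous_on[OF h]
          continuous_on_primitive_fst[OF C1_on_partials_continuous(2)[OF h]]])
  show "p \<in> half_plane \<Longrightarrow> partial_fst (primitive_fst h) p = h p"
    "p \<in> half_plane \<Longrightarrow> partial_snd (primitive_fst h) p = primitive_fst (partial_snd h) p"
    using partials_eqI[OF D] by auto
qed

lemma C2_on_primitive_fst:
  assumes "C2_on half_plane h"
  shows "C2_on half_plane (primitive_fst h)"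
proof -
  have h: "C1_on half_plane h" "C1_on half_plane (partial_snd h)"
    using C2_on_imp_C1_on[OF assms] by auto
  show ?thesis
    by (rule C2_onI[OF open_half_plane C1_on_primitive_fst(1)[OF h(1)] h(1) C1_on_primitive_fst(1)[OF h(2)]])
       (use C1_on_primitive_fst(2,3)[OF h(1)] in auto)
qed

section \<open>The angle coordinate Q\<close>

definition int_inv_a :: "real \<Rightarrow> real \<times> real \<Rightarrow> real" where
  "int_inv_a e = primitive_fst (inv_a e)"

definition Q_of :: "real \<Rightarrow> real \<times> real \<Rightarrow> real" where
  "Q_of e p = 2 * pi * int_inv_a e p / int_inv_a e (2 * pi, snd p)"

lemma C2_on_int_inv_a: "e > 0 \<Longrightarrow> C2_on half_plane (int_inv_a e)"
  unfolding int_inv_a_def by (intro C2_on_primitive_fst C2_on_inv_a)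

lemma has_real_derivative_int_inv_a:
  "e > 0 \<Longrightarrow> k > 0 \<Longrightarrow> ((\<lambda>c. int_inv_a e (c, k)) has_real_derivative inv_a e (c, k)) (at c)"
  unfolding int_inv_a_def
  by (intro has_real_derivative_primitive_fst C1_on_imp_continuous_on C2_on_imp_C1_on C2_on_inv_a)

lemma int_inv_a_zero [simp]: "int_inv_a e (0, k) = 0"
  unfolding int_inv_a_def primitive_fst_def by (simp add: zero_ereal_def)

lemma int_inv_a_strict_mono:
  assumes "e > 0" "k > 0" "a < b"
  shows "int_inv_a e (a, k) < int_inv_a e (b, k)"
  using assms(3)
proof (rule DERIV_pos_imp_increasing)
  fix x show "\<exists>y. ((\<lambda>c. int_inv_a e (c, k)) has_real_derivative y) (at x) \<and> 0 < y"
    using has_real_derivative_int_inv_a inv_a_pos[of e "(x, k)"] assms by auto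
qed

lemma int_inv_a_period_pos: "e > 0 \<Longrightarrow> k > 0 \<Longrightarrow> int_inv_a e (2 * pi, k) > 0"
  using int_inv_a_strict_mono[of e k 0 "2 * pi"] by simp

text \<open>The shifted primitive has the same derivative, because inv_a is 2 pi-periodic.\<close>

lemma int_inv_a_shift:
  assumes e: "e > 0" and k: "k > 0"
  shows "int_inv_a e (c + 2 * pi, k) = int_inv_a e (c, k) + int_inv_a e (2 * pi, k)"
proof -
  have "\<forall>x. ((\<lambda>c. int_inv_a e (c + 2 * pi, k) - int_inv_a e (c, k)) has_real_derivative 0) (at x)"
  proof
    fix x
    have "((\<lambda>c. int_inv_a e (c + 2 * pi, k)) has_real_derivative inv_a e (x + 2 * pi, k)) (at x)"
      using DERIV_chain2[OF has_real_derivative_int_inv_a[OF e k] DERIV_add[OF DERIV_ident DERIV_const]]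
      by simp
    from DERIV_diff[OF this has_real_derivative_int_inv_a[OF e k, of x]]
    show "((\<lambda>c. int_inv_a e (c + 2 * pi, k) - int_inv_a e (c, k)) has_real_derivative 0) (at x)"
      using inv_a_int_shift[of e x 1 k] by simp
  qed
  from DERIV_isconst_all[OF this, of c 0] show ?thesis by simp
qed

lemma cfun_eq: "e > 0 \<Longrightarrow> k > 0 \<Longrightarrow> cfun e k = 2 * pi / int_inv_a e (2 * pi, k)"
  unfolding cfun_def int_inv_a_def primitive_fst_def by (simp add: inv_acoef_eq)

lemma Qfun_eq: "e > 0 \<Longrightarrow> k > 0 \<Longrightarrow> Qfun e c k = Q_of e (c, k)"
  unfolding Qfun_def Q_of_def cfun_eq int_inv_a_def primitive_fst_def by (simp add: inv_acoef_eq)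

lemma Q_of_eq_cfun: "e > 0 \<Longrightarrow> k > 0 \<Longrightarrow> Q_of e (c, k) = cfun e k * int_inv_a e (c, k)"
  unfolding Q_of_def cfun_eq by simp

lemma cfun_pos: "e > 0 \<Longrightarrow> k > 0 \<Longrightarrow> cfun e k > 0"
  unfolding cfun_eq using int_inv_a_period_pos by simp

lemma C2_on_Q_of: "e > 0 \<Longrightarrow> C2_on half_plane (Q_of e)"
  unfolding Q_of_def[abs_def]
  by (intro C2_on_divide C2_on_mult C2_on_const C2_on_int_inv_a open_half_plane
      C2_on_compose[OF open_half_plane C2_on_int_inv_a C2_on_const C2_on_snd, simplified])
     (auto simp: half_plane_def int_inv_a_period_pos)

lemma has_real_derivative_Q_of:
  assumes "e > 0" "k > 0"
  shows "((\<lambda>c. Q_of e (c, k)) has_real_derivative cfun e k * inv_a e (c, k)) (at c)"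
  using DERIV_cmult[OF has_real_derivative_int_inv_a[OF assms], of "cfun e k"]
  by (simp add: Q_of_eq_cfun[OF assms])

lemma partial_fst_Q_of:
  assumes "e > 0" "p \<in> half_plane"
  shows "partial_fst (Q_of e) p = cfun e (snd p) * inv_a e p" and "partial_fst (Q_of e) p > 0"
proof -
  obtain c k where p: "p = (c, k)" and k: "k > 0" using assms(2) by (cases p) auto
  have "((\<lambda>c. Q_of e (c, k)) has_real_derivative partial_fst (Q_of e) (c, k)) (at c)"
    using has_real_derivative_fst_slice[OF C1_on_has_derivative[OF C2_on_imp_C1_on(1)[OF C2_on_Q_of]]]
      assms k by simp
  from DERIV_unique[OF this has_real_derivative_Q_of[OF assms(1) k]]
  show "partial_fst (Q_of e) p = cfun e (snd p) * inv_a e p" using p by simp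
  then show "partial_fst (Q_of e) p > 0" using cfun_pos inv_a_pos assms k p by simp
qed

lemma Q_of_int_shift:
  assumes "e > 0" "k > 0"
  shows "Q_of e (c + 2 * pi * of_int m, k) = Q_of e (c, k) + 2 * pi * of_int m"
proof (rule quasi_periodic_int_shift[where f="\<lambda>c. Q_of e (c, k)"])
  fix c
  show "Q_of e (c + 2 * pi, k) = Q_of e (c, k) + 2 * pi"
    unfolding Q_of_def using int_inv_a_shift[OF assms] int_inv_a_period_pos[OF assms]
    by (simp add: field_simps)
qed

lemma Q_of_strict_mono:
  assumes "e > 0" "k > 0" "a < b"
  shows "Q_of e (a, k) < Q_of e (b, k)"
proof -
  have "int_inv_a e (a, k) < int_inv_a e (b, k)" using int_inv_a_strict_mono[OF assms] .
  then show ?thesis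
    unfolding Q_of_def using int_inv_a_period_pos[OF assms(1,2)] by (simp add: divide_strict_right_mono)
qed

lemma Q_of_inj: "e > 0 \<Longrightarrow> k > 0 \<Longrightarrow> Q_of e (a, k) = Q_of e (b, k) \<Longrightarrow> a = b"
  using Q_of_strict_mono[of e k a b] Q_of_strict_mono[of e k b a] by (cases a b rule: linorder_cases) auto

lemma Q_of_surj:
  assumes e: "e > 0" and k: "k > 0"
  shows "\<exists>c. Q_of e (c, k) = q"
proof -
  obtain m :: int where m: "0 \<le> q + 2 * pi * of_int m" "q + 2 * pi * of_int m < 0 + 2 * pi"
    using period_representative[of "2 * pi" 0 q] by auto
  define a where "a = 2 * pi * of_int (- m)"
  have Qa: "Q_of e (a, k) = a"
    using Q_of_int_shift[OF e k, of 0 "- m"] unfolding a_def by (simp add: Q_of_def)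
  have Qb: "Q_of e (a + 2 * pi, k) = a + 2 * pi"
    using Q_of_int_shift[OF e k, of a 1] Qa by simp
  have "continuous_on {a .. a + 2 * pi} (\<lambda>c. Q_of e (c, k))"
    using has_real_derivative_Q_of[OF e k] by (meson DERIV_isCont continuous_at_imp_continuous_on)
  moreover have "a \<le> q" "q \<le> a + 2 * pi"
    using m unfolding a_def by simp_all
  then have "Q_of e (a, k) \<le> q" "q \<le> Q_of e (a + 2 * pi, k)"
    unfolding Qa Qb by simp_all
  ultimately show ?thesis using IVT'[of "\<lambda>c. Q_of e (c, k)" a q "a + 2 * pi"] by auto
qed

definition chi_of_Q :: "real \<Rightarrow> real \<Rightarrow> real \<Rightarrow> real" where
  "chi_of_Q e q k = (THE c. Q_of e (c, k) = q)"

definition chiK_of_QK :: "real \<Rightarrow> real \<times> real \<Rightarrow> real \<times> real" where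
  "chiK_of_QK e y = (chi_of_Q e (fst y) (snd y), snd y)"

lemma Q_of_chi_of_Q:
  assumes "e > 0" "k > 0"
  shows "Q_of e (chi_of_Q e q k, k) = q"
proof -
  obtain c where c: "Q_of e (c, k) = q" using Q_of_surj[OF assms] by blast
  have "x = c" if "Q_of e (x, k) = q" for x
    using Q_of_inj[OF assms, of x c] that c by simp
  then show ?thesis
    unfolding chi_of_Q_def by (rule theI[where P="\<lambda>x. Q_of e (x, k) = q", OF c])
qed

lemma chi_of_Q_Q_of: "e > 0 \<Longrightarrow> k > 0 \<Longrightarrow> chi_of_Q e (Q_of e (c, k)) k = c"
  by (rule Q_of_inj[OF _ _ Q_of_chi_of_Q])

lemma chiK_of_QK_half_plane: "k > 0 \<Longrightarrow> chiK_of_QK e (q, k) \<in> half_plane"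
  unfolding chiK_of_QK_def by simp

lemma has_derivative_chiK_of_QK:
  fixes q :: real
  assumes e: "e > 0" and k: "k > 0"
  defines "p \<equiv> chiK_of_QK e (q, k)"
  shows "(chiK_of_QK e has_derivative
    (\<lambda>h. ((fst h - partial_snd (Q_of e) p * snd h) / partial_fst (Q_of e) p, snd h))) (at (q, k))"
proof -
  define f where "f = (\<lambda>p. (Q_of e p, snd p))"
  have p: "p \<in> half_plane" unfolding p_def using chiK_of_QK_half_plane k .
  have fp: "f p = (q, k)" unfolding f_def p_def chiK_of_QK_def using Q_of_chi_of_Q[OF e k] by simp
  have Q: "C1_on half_plane (Q_of e)" using C2_on_imp_C1_on(1)[OF C2_on_Q_of[OF e]] .
  have cont: "continuous_on half_plane f"
    unfolding f_def using C1_on_imp_continuous_on[OF Q] by (intro continuous_intros)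
  have inv: "chiK_of_QK e (f z) = z" if "z \<in> half_plane" for z
    using that chi_of_Q_Q_of[OF e] unfolding f_def chiK_of_QK_def half_plane_def by (cases z) auto
  have df: "(f has_derivative
      (\<lambda>h. (partial_fst (Q_of e) p * fst h + partial_snd (Q_of e) p * snd h, snd h))) (at p)"
    unfolding f_def
    by (intro has_derivative_Pair C1_on_has_derivative[OF Q p] has_derivative_snd has_derivative_ident)
  have id: "(\<lambda>h. (partial_fst (Q_of e) p * fst h + partial_snd (Q_of e) p * snd h, snd h))
      \<circ> (\<lambda>h. ((fst h - partial_snd (Q_of e) p * snd h) / partial_fst (Q_of e) p, snd h)) = id"
    using partial_fst_Q_of(2)[OF e p] by (auto simp: fun_eq_iff field_simps)
  from has_derivative_inverse_strong[OF open_half_plane p cont inv df id]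
  show ?thesis unfolding fp .
qed

lemma has_real_derivative_cfun:
  assumes e: "e > 0" and k: "k > 0"
  shows "(cfun e has_real_derivative deriv (cfun e) k) (at k)"
proof -
  let ?I = "\<lambda>k. int_inv_a e (2 * pi, k)"
  have "(?I has_real_derivative partial_snd (int_inv_a e) (2 * pi, k)) (at k)"
    using has_real_derivative_snd_slice[OF C1_on_has_derivative[OF C2_on_imp_C1_on(1)[OF C2_on_int_inv_a[OF e]]]] k
    by simp
  from DERIV_divide[OF DERIV_const this] int_inv_a_period_pos[OF e k]
  have "((\<lambda>k. 2 * pi / ?I k) has_real_derivative
      (0 * ?I k - 2 * pi * partial_snd (int_inv_a e) (2 * pi, k)) / (?I k * ?I k)) (at k)"
    by simp
  then have "(cfun e has_real_derivative
      (0 * ?I k - 2 * pi * partial_snd (int_inv_a e) (2 * pi, k)) / (?I k * ?I k)) (at k)"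
    by (rule has_field_derivative_transform_within_open[where S="{0<..}"]) (use k cfun_eq[OF e] in auto)
  then show ?thesis using DERIV_imp_deriv by metis
qed

section \<open>The derivative in K at fixed Q\<close>

text \<open>The derivative d/dK in the coordinates (Q, K), written at the point (chi, K): along a curve
  of constant Q, chi moves with speed - (dQ/dK) / (dQ/dchi).\<close>

definition partial_K :: "real \<Rightarrow> (real \<times> real \<Rightarrow> real) \<Rightarrow> real \<times> real \<Rightarrow> real" where
  "partial_K e F p = partial_snd F p - partial_fst F p * partial_snd (Q_of e) p / partial_fst (Q_of e) p"

lemma has_derivative_compose_chiK_of_QK:
  fixes q :: real
  assumes e: "e > 0" and F: "C1_on half_plane F" and k: "k > 0"
  defines "p \<equiv> chiK_of_QK e (q, k)"
  shows "((\<lambda>y. F (chiK_of_QK e y)) has_derivative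
    (\<lambda>h. partial_fst F p / partial_fst (Q_of e) p * fst h + partial_K e F p * snd h)) (at (q, k))"
proof -
  have p: "p \<in> half_plane" unfolding p_def using chiK_of_QK_half_plane k .
  from has_derivative_compose[OF has_derivative_chiK_of_QK[OF e k, of q] C1_on_has_derivative[OF F p[unfolded p_def]]]
  show ?thesis
    by (rule has_derivative_eq_rhs)
       (use partial_fst_Q_of(2)[OF e p] in \<open>auto simp: fun_eq_iff p_def partial_K_def field_simps\<close>)
qed

text \<open>The term t c'(K) d/dQ of Y exactly compensates the K-dependence of the phase Q + c(K) t.\<close>

lemma Yop_transported:
  assumes e: "e > 0" and F: "C1_on half_plane F"
    and h: "\<And>q k. k > 0 \<Longrightarrow> h t q k = F (chiK_of_QK e (q + cfun e k * t, k))"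
    and k: "k > 0"
  shows "Yop e h t q k = - partial_K e F (chiK_of_QK e (q + cfun e k * t, k))"
proof -
  define p where "p = chiK_of_QK e (q + cfun e k * t, k)"
  define A where "A = partial_fst F p / partial_fst (Q_of e) p"
  define B where "B = partial_K e F p"
  define c' where "c' = deriv (cfun e) k"
  have dc: "(cfun e has_real_derivative c') (at k)" unfolding c'_def using has_real_derivative_cfun[OF e k] .
  have dF: "((\<lambda>y. F (chiK_of_QK e y)) has_derivative (\<lambda>h. A * fst h + B * snd h)) (at (q + cfun e k * t, k))"
    unfolding A_def B_def p_def using has_derivative_compose_chiK_of_QK[OF e F k] .
  have dq: "((\<lambda>q'. h t q' k) has_real_derivative A) (at q)"
  proof -
    have "((\<lambda>q'. F (chiK_of_QK e (q' + cfun e k * t, k))) has_derivative (\<lambda>d. A * fst (d, 0::real) + B * snd (d, 0::real))) (at q)"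
      by (rule has_derivative_compose[of "\<lambda>q'. (q' + cfun e k * t, k)", OF _ dF])
         (auto intro!: derivative_eq_intros)
    then show ?thesis using h[OF k] by (simp add: has_field_derivative_def)
  qed
  have dk: "((\<lambda>k'. h t q k') has_real_derivative A * (c' * t) + B) (at k)"
  proof -
    have "((\<lambda>k'. (q + cfun e k' * t, k')) has_derivative (\<lambda>d. (d * c' * t, d))) (at k)"
      using dc unfolding has_field_derivative_def
      by (auto intro!: derivative_eq_intros simp: mult.commute mult.left_commute)
    from has_derivative_compose[OF this dF]
    have "((\<lambda>k'. F (chiK_of_QK e (q + cfun e k' * t, k'))) has_real_derivative A * (c' * t) + B) (at k)"
      unfolding has_field_derivative_def by (rule has_derivative_eq_rhs) (simp add: fun_eq_iff algebra_simps)
    then show ?thesis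
      by (rule has_field_derivative_transform_within_open[where S="{0<..}"]) (use k h in auto)
  qed
  have "Yop e h t q k = t * c' * A - (A * (c' * t) + B)"
    unfolding Yop_def using DERIV_imp_deriv[OF dc] DERIV_imp_deriv[OF dq] DERIV_imp_deriv[OF dk] by simp
  then show ?thesis unfolding B_def p_def by (simp add: algebra_simps)
qed

context
  fixes e :: real
  assumes e: "e > 0"
begin

lemma C1_on_Q_of:
  "C1_on half_plane (Q_of e)" "C1_on half_plane (partial_fst (Q_of e))" "C1_on half_plane (partial_snd (Q_of e))"
  using C2_on_imp_C1_on[OF C2_on_Q_of[OF e]] by auto

lemma C1_on_partial_K:
  assumes "C2_on half_plane F"
  shows "C1_on half_plane (partial_K e F)"
proof -
  have "C1_on half_plane (\<lambda>p. 1 / partial_fst (Q_of e) p)"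
    by (rule C1_on_inverse[OF C1_on_Q_of(2) partial_fst_Q_of(2)[OF e]])
  then have "C1_on half_plane
      (\<lambda>p. partial_snd F p + - (partial_fst F p * partial_snd (Q_of e) p * (1 / partial_fst (Q_of e) p)))"
    using C2_on_imp_C1_on[OF assms] by (intro C1_on_add C1_on_uminus C1_on_mult C1_on_Q_of)
  then show ?thesis unfolding partial_K_def[abs_def] by simp
qed

lemma continuous_on_partial_K:
  assumes "C1_on half_plane F"
  shows "continuous_on half_plane (partial_K e F)"
  unfolding partial_K_def[abs_def] using partial_fst_Q_of(2)[OF e]
  by (intro continuous_intros C1_on_partials_continuous assms C1_on_Q_of) (metis less_irrefl)

lemma partial_K_add:
  "C1_on half_plane F \<Longrightarrow> C1_on half_plane G \<Longrightarrow> p \<in> half_plane \<Longrightarrow>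
    partial_K e (\<lambda>p. F p + G p) p = partial_K e F p + partial_K e G p"
  unfolding partial_K_def using C1_on_add(2,3)[of half_plane F G p] by (simp add: algebra_simps add_divide_distrib)

lemma partial_K_uminus:
  "C1_on half_plane F \<Longrightarrow> p \<in> half_plane \<Longrightarrow> partial_K e (\<lambda>p. - F p) p = - partial_K e F p"
  unfolding partial_K_def using C1_on_uminus(2,3)[of half_plane F p] by (simp add: algebra_simps)

lemma partial_K_mult:
  "C1_on half_plane F \<Longrightarrow> C1_on half_plane G \<Longrightarrow> p \<in> half_plane \<Longrightarrow>
    partial_K e (\<lambda>p. F p * G p) p = partial_K e F p * G p + F p * partial_K e G p"
  unfolding partial_K_def using C1_on_mult(2,3)[of half_plane F G p] partial_fst_Q_of(2)[OF e, of p]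
  by (simp add: field_simps)

lemma partial_K_compose:
  assumes "C1_on UNIV F" "C1_on half_plane U" "C1_on half_plane W" "p \<in> half_plane"
  shows "partial_K e (\<lambda>p. F (U p, W p)) p
    = partial_fst F (U p, W p) * partial_K e U p + partial_snd F (U p, W p) * partial_K e W p"
  unfolding partial_K_def using C1_on_compose(2,3)[OF assms(1-3) _ assms(4)] partial_fst_Q_of(2)[OF e assms(4)]
  by (simp add: field_simps)

lemma partial_K_cong:
  "(\<And>x. x \<in> half_plane \<Longrightarrow> F x = G x) \<Longrightarrow> p \<in> half_plane \<Longrightarrow> partial_K e F p = partial_K e G p"
  unfolding partial_K_def using partials_cong[OF open_half_plane, of p F G] by simp

end

definition chi_periodic :: "(real \<times> real \<Rightarrow> real) \<Rightarrow> bool" where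
  "chi_periodic F \<longleftrightarrow> (\<forall>c k. k > 0 \<longrightarrow> F (c + 2 * pi, k) = F (c, k))"

lemma chi_periodic_int_shift:
  "chi_periodic F \<Longrightarrow> k > 0 \<Longrightarrow> F (c + 2 * pi * of_int m, k) = F (c, k)"
  using periodic_int_shift[of "\<lambda>c. F (c, k)" "2 * pi"] unfolding chi_periodic_def by simp

lemma chi_periodic_partials:
  assumes F: "C1_on half_plane F" and shift: "\<And>c k. k > 0 \<Longrightarrow> F (c + 2 * pi, k) = F (c, k) + d"
  shows "chi_periodic (partial_fst F)" "chi_periodic (partial_snd F)"
proof -
  have "partial_fst F (c + 2 * pi, k) = partial_fst F (c, k) \<and> partial_snd F (c + 2 * pi, k) = partial_snd F (c, k)"
    if k: "k > 0" for c k
  proof -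
    have p: "(c, k) \<in> half_plane" "(c + 2 * pi, k) \<in> half_plane" using k by auto
    have D1: "((\<lambda>x. F x + d) has_derivative
        (\<lambda>h. partial_fst F (c, k) * fst h + partial_snd F (c, k) * snd h)) (at (c, k))"
      using has_derivative_add_const[OF C1_on_has_derivative[OF F p(1)]] .
    have sh: "((\<lambda>x. (fst x + 2 * pi, snd x)) has_derivative (\<lambda>h. (fst h, snd h))) (at (c, k))"
      by (auto intro!: derivative_eq_intros)
    have "(F has_derivative (\<lambda>h. partial_fst F (c + 2 * pi, k) * fst h + partial_snd F (c + 2 * pi, k) * snd h))
        (at ((\<lambda>x. (fst x + 2 * pi, snd x)) (c, k)))"
      using C1_on_has_derivative[OF F p(2)] by simp
    from has_derivative_compose[OF sh this]
    have "((\<lambda>x. F (fst x + 2 * pi, snd x)) has_derivative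
        (\<lambda>h. partial_fst F (c + 2 * pi, k) * fst h + partial_snd F (c + 2 * pi, k) * snd h)) (at (c, k))"
      by simp
    then have D2: "((\<lambda>x. F x + d) has_derivative
        (\<lambda>h. partial_fst F (c + 2 * pi, k) * fst h + partial_snd F (c + 2 * pi, k) * snd h)) (at (c, k))"
      by (rule has_derivative_transform_within_open[OF _ open_half_plane p(1)])
        (auto simp: half_plane_def shift)
    show ?thesis using partials_eqI[OF D1] partials_eqI[OF D2] by simp
  qed
  then show "chi_periodic (partial_fst F)" "chi_periodic (partial_snd F)"
    unfolding chi_periodic_def by auto
qed

lemma chi_periodic_partial_K:
  assumes e: "e > 0" and F: "C1_on half_plane F" "chi_periodic F"
  shows "chi_periodic (partial_K e F)"
proof -
  have "chi_periodic (partial_fst F)" "chi_periodic (partial_snd F)"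
    using chi_periodic_partials[OF F(1), of 0] F(2) unfolding chi_periodic_def by auto
  moreover have "chi_periodic (partial_fst (Q_of e))" "chi_periodic (partial_snd (Q_of e))"
    using chi_periodic_partials[OF C1_on_Q_of(1)[OF e], of "2 * pi"] Q_of_int_shift[OF e, of _ _ 1] by auto
  ultimately show ?thesis unfolding chi_periodic_def partial_K_def by auto
qed

lemma chi_periodic_x_of_v_of: "chi_periodic (x_of e)" "chi_periodic v_of"
  unfolding chi_periodic_def using x_of_int_shift[of e _ 1] v_of_int_shift[of _ 1] by auto

section \<open>Smooth initial data\<close>

lemma partials_case_prod:
  assumes "case_prod g differentiable_on UNIV"
  shows "partial_fst (case_prod g) (x, v) = pdx g x v" and "partial_snd (case_prod g) (x, v) = pdv g x v"
    and "((\<lambda>y. g y v) has_real_derivative pdx g x v) (at x)"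
    and "((\<lambda>w. g x w) has_real_derivative pdv g x v) (at v)"
proof -
  have "case_prod g differentiable at (x, v)" using assms unfolding differentiable_on_def by simp
  note D = has_derivative_partials[OF this]
  have 1: "((\<lambda>y. g y v) has_real_derivative partial_fst (case_prod g) (x, v)) (at x)"
    using has_real_derivative_fst_slice[OF D] by simp
  have 2: "((\<lambda>w. g x w) has_real_derivative partial_snd (case_prod g) (x, v)) (at v)"
    using has_real_derivative_snd_slice[OF D] by simp
  show "partial_fst (case_prod g) (x, v) = pdx g x v" "partial_snd (case_prod g) (x, v) = pdv g x v"
    unfolding pdx_def pdv_def using DERIV_imp_deriv[OF 1] DERIV_imp_deriv[OF 2] by simp_all
  then show "((\<lambda>y. g y v) has_real_derivative pdx g x v) (at x)"
    "((\<lambda>w. g x w) has_real_derivative pdv g x v) (at v)"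
    using 1 2 by simp_all
qed

lemma C1_on_case_prod:
  assumes "case_prod g differentiable_on UNIV"
    and "case_prod (pdx g) differentiable_on UNIV" "case_prod (pdv g) differentiable_on UNIV"
  shows "C1_on UNIV (case_prod g)"
proof -
  have "partial_fst (case_prod g) = case_prod (pdx g)" "partial_snd (case_prod g) = case_prod (pdv g)"
    using partials_case_prod(1,2)[OF assms(1)] by auto
  moreover have "continuous_on UNIV (case_prod (pdx g))" "continuous_on UNIV (case_prod (pdv g))"
    using assms(2,3) differentiable_imp_continuous_on by auto
  ultimately show ?thesis using assms(1) unfolding C1_on_def differentiable_on_def by simp
qed

lemma smooth2_differentiable_on: "smooth2 f \<Longrightarrow> case_prod (iter_pd ops f) differentiable_on UNIV"
  unfolding smooth2_def differentiable_on_def by simp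

lemma smooth2_differentiable_on_partials:
  assumes "smooth2 f"
  shows "case_prod f differentiable_on UNIV" "case_prod (pdx f) differentiable_on UNIV"
    "case_prod (pdv f) differentiable_on UNIV" "case_prod (pdx (pdx f)) differentiable_on UNIV"
    "case_prod (pdv (pdx f)) differentiable_on UNIV" "case_prod (pdx (pdv f)) differentiable_on UNIV"
    "case_prod (pdv (pdv f)) differentiable_on UNIV"
  using smooth2_differentiable_on[OF assms, of "[]"] smooth2_differentiable_on[OF assms, of "[True]"]
    smooth2_differentiable_on[OF assms, of "[False]"] smooth2_differentiable_on[OF assms, of "[True, True]"]
    smooth2_differentiable_on[OF assms, of "[False, True]"] smooth2_differentiable_on[OF assms, of "[True, False]"]
    smooth2_differentiable_on[OF assms, of "[False, False]"]
  by simp_all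

lemma smooth2_C2_on:
  assumes "smooth2 f"
  shows "C2_on UNIV (case_prod f)" "C1_on UNIV (case_prod (pdx f))" "C1_on UNIV (case_prod (pdv f))"
proof -
  note d = smooth2_differentiable_on_partials[OF assms]
  show C1: "C1_on UNIV (case_prod (pdx f))" "C1_on UNIV (case_prod (pdv f))"
    using C1_on_case_prod[OF d(2) d(4) d(5)] C1_on_case_prod[OF d(3) d(6) d(7)] .
  have "partial_fst (case_prod f) = case_prod (pdx f)" "partial_snd (case_prod f) = case_prod (pdv f)"
    using partials_case_prod(1,2)[OF d(1)] by auto
  then show "C2_on UNIV (case_prod f)"
    unfolding C2_on_def using C1 C1_on_case_prod[OF d(1-3)] by simp
qed

lemma second_difference_mean_value:
  fixes g g1 g12 :: "real \<Rightarrow> real \<Rightarrow> real"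
  assumes d1: "\<And>y w. ((\<lambda>y. g y w) has_real_derivative g1 y w) (at y)"
    and d12: "\<And>y w. ((\<lambda>w. g1 y w) has_real_derivative g12 y w) (at w)"
    and h: "h > 0"
  obtains \<xi> \<eta> where "x0 < \<xi>" "\<xi> < x0 + h" "v0 < \<eta>" "\<eta> < v0 + h"
    "g (x0 + h) (v0 + h) - g (x0 + h) v0 - g x0 (v0 + h) + g x0 v0 = h * h * g12 \<xi> \<eta>"
proof -
  obtain \<xi> where \<xi>: "x0 < \<xi>" "\<xi> < x0 + h"
    "(g (x0 + h) (v0 + h) - g (x0 + h) v0) - (g x0 (v0 + h) - g x0 v0) = h * (g1 \<xi> (v0 + h) - g1 \<xi> v0)"
    using MVT2[of x0 "x0 + h" "\<lambda>y. g y (v0 + h) - g y v0" "\<lambda>y. g1 y (v0 + h) - g1 y v0"] h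
      DERIV_diff[OF d1 d1] by auto
  obtain \<eta> where \<eta>: "v0 < \<eta>" "\<eta> < v0 + h" "g1 \<xi> (v0 + h) - g1 \<xi> v0 = h * g12 \<xi> \<eta>"
    using MVT2[of v0 "v0 + h" "g1 \<xi>" "g12 \<xi>"] h d12 by auto
  show ?thesis using that[OF \<xi>(1,2) \<eta>(1,2)] \<xi>(3) \<eta>(3) by (simp add: algebra_simps)
qed

text \<open>Schwarz: the second difference quotient at scale h is a value of either mixed partial near
  the base point, so continuity forces the two mixed partials to agree.\<close>

lemma pdv_pdx_commute:
  fixes g :: "real \<Rightarrow> real \<Rightarrow> real"
  assumes D: "case_prod g differentiable_on UNIV"
    "case_prod (pdx g) differentiable_on UNIV" "case_prod (pdv g) differentiable_on UNIV"
    and cA: "continuous_on UNIV (case_prod (pdv (pdx g)))"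
    and cB: "continuous_on UNIV (case_prod (pdx (pdv g)))"
  shows "pdv (pdx g) x0 v0 = pdx (pdv g) x0 v0"
proof -
  define a where "a = pdv (pdx g) x0 v0"
  define b where "b = pdx (pdv g) x0 v0"
  have "\<bar>a - b\<bar> < 2 * \<epsilon>" if \<epsilon>: "\<epsilon> > 0" for \<epsilon>
  proof -
    have "isCont (case_prod (pdv (pdx g))) (x0, v0)" "isCont (case_prod (pdx (pdv g))) (x0, v0)"
      using cA cB by (simp_all add: continuous_on_eq_continuous_at)
    then obtain d1 d2 where d: "d1 > 0" "d2 > 0"
      and near: "\<And>p. dist p (x0, v0) < d1 \<Longrightarrow> \<bar>case_prod (pdv (pdx g)) p - a\<bar> < \<epsilon>"
        "\<And>p. dist p (x0, v0) < d2 \<Longrightarrow> \<bar>case_prod (pdx (pdv g)) p - b\<bar> < \<epsilon>"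
      unfolding continuous_at_eps_delta a_def b_def dist_real_def using \<epsilon> by fastforce
    define h where "h = min d1 d2 / 2"
    have h: "h > 0" unfolding h_def using d by simp
    have close: "dist (x, v) (x0, v0) < d1" "dist (x, v) (x0, v0) < d2"
      if "x0 < x" "x < x0 + h" "v0 < v" "v < v0 + h" for x v
    proof -
      have "dist (x, v) (x0, v0) \<le> \<bar>x - x0\<bar> + \<bar>v - v0\<bar>"
        unfolding dist_Pair_Pair dist_real_def using sqrt_sum_squares_le_sum_abs[of "x - x0" "v - v0"] by simp
      also have "\<dots> < 2 * h" using that by simp
      finally show "dist (x, v) (x0, v0) < d1" "dist (x, v) (x0, v0) < d2" unfolding h_def by auto
    qed
    obtain \<xi> \<eta> where \<xi>\<eta>: "x0 < \<xi>" "\<xi> < x0 + h" "v0 < \<eta>" "\<eta> < v0 + h"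
      "g (x0 + h) (v0 + h) - g (x0 + h) v0 - g x0 (v0 + h) + g x0 v0 = h * h * pdv (pdx g) \<xi> \<eta>"
      using second_difference_mean_value[of g "pdx g" "pdv (pdx g)", OF _ _ h]
        partials_case_prod(3)[OF D(1)] partials_case_prod(4)[OF D(2)] by blast
    obtain \<eta>' \<xi>' where \<xi>\<eta>': "v0 < \<eta>'" "\<eta>' < v0 + h" "x0 < \<xi>'" "\<xi>' < x0 + h"
      "g (x0 + h) (v0 + h) - g x0 (v0 + h) - g (x0 + h) v0 + g x0 v0 = h * h * pdx (pdv g) \<xi>' \<eta>'"
      using second_difference_mean_value[of "\<lambda>w y. g y w" "\<lambda>w y. pdv g y w" "\<lambda>w y. pdx (pdv g) y w", OF _ _ h]
        partials_case_prod(4)[OF D(1)] partials_case_prod(3)[OF D(3)] by blast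
    have "h * h * pdv (pdx g) \<xi> \<eta> = h * h * pdx (pdv g) \<xi>' \<eta>'" using \<xi>\<eta>(5) \<xi>\<eta>'(5) by linarith
    then have "pdv (pdx g) \<xi> \<eta> = pdx (pdv g) \<xi>' \<eta>'" using h by simp
    moreover have "\<bar>pdv (pdx g) \<xi> \<eta> - a\<bar> < \<epsilon>" using near(1)[OF close(1)[OF \<xi>\<eta>(1-4)]] by simp
    moreover have "\<bar>pdx (pdv g) \<xi>' \<eta>' - b\<bar> < \<epsilon>" using near(2)[OF close(2)[OF \<xi>\<eta>'(3,4,1,2)]] by simp
    ultimately show ?thesis by linarith
  qed
  from this[of "\<bar>a - b\<bar> / 2"] show ?thesis unfolding a_def b_def by fastforce
qed

lemma smooth2_pdv_pdx_commute: "smooth2 f \<Longrightarrow> pdv (pdx f) x v = pdx (pdv f) x v"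
  using pdv_pdx_commute smooth2_differentiable_on_partials differentiable_imp_continuous_on by metis

section \<open>Bounds on the Y-derivatives of the solution\<close>

lemma abs_lincomb_le:
  fixes A B M u w :: real
  assumes "\<bar>A\<bar> \<le> M" "\<bar>B\<bar> \<le> M"
  shows "\<bar>A * u + B * w\<bar> \<le> M * (\<bar>u\<bar> + \<bar>w\<bar>)"
proof -
  have "\<bar>A * u + B * w\<bar> \<le> \<bar>A\<bar> * \<bar>u\<bar> + \<bar>B\<bar> * \<bar>w\<bar>"
    using abs_triangle_ineq[of "A * u" "B * w"] by (simp add: abs_mult)
  also have "\<dots> \<le> M * \<bar>u\<bar> + M * \<bar>w\<bar>" using assms by (intro add_mono mult_right_mono) auto
  finally show ?thesis by (simp add: algebra_simps)
qed

lemma derivative_bounds: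
  fixes f :: "real \<Rightarrow> real \<Rightarrow> real"
  assumes "\<forall>x v. (\<Sum>(a, b) \<in> {(a, b). a + b \<le> (2::nat)}. \<bar>(pdx ^^ a) ((pdv ^^ b) f) x v\<bar>) \<le> M"
  shows "\<bar>f x v\<bar> \<le> M" "\<bar>pdx f x v\<bar> \<le> M" "\<bar>pdv f x v\<bar> \<le> M"
    "\<bar>pdx (pdx f) x v\<bar> \<le> M" "\<bar>pdx (pdv f) x v\<bar> \<le> M" "\<bar>pdv (pdv f) x v\<bar> \<le> M"
proof -
  define T where "T = {(a, b). a + b \<le> (2::nat)}"
  define g where "g = (\<lambda>(a, b). \<bar>(pdx ^^ a) ((pdv ^^ b) f) x v\<bar>)"
  have fin: "finite T" by (rule finite_subset[of _ "{0..2} \<times> {0..2}"]) (auto simp: T_def)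
  have le: "g i \<le> M" if "i \<in> T" for i
  proof -
    have "g i \<le> sum g T" by (rule member_le_sum[OF that _ fin]) (auto simp: g_def)
    also have "\<dots> \<le> M" using assms unfolding T_def g_def by blast
    finally show ?thesis .
  qed
  show "\<bar>f x v\<bar> \<le> M" "\<bar>pdx f x v\<bar> \<le> M" "\<bar>pdv f x v\<bar> \<le> M"
    "\<bar>pdx (pdx f) x v\<bar> \<le> M" "\<bar>pdx (pdv f) x v\<bar> \<le> M" "\<bar>pdv (pdv f) x v\<bar> \<le> M"
    using le[of "(0, 0)"] le[of "(1, 0)"] le[of "(0, 1)"] le[of "(2, 0)"] le[of "(1, 1)"] le[of "(0, 2)"]
    by (simp_all add: T_def g_def numeral_2_eq_2)
qed

lemma transport_solution:
  fixes u :: "real \<Rightarrow> real \<Rightarrow> real"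
  assumes u: "\<forall>t q. t \<ge> 0 \<longrightarrow> (\<exists>ut uq. ((\<lambda>(s, r). u s r) has_derivative (\<lambda>(ds, dr). ds * ut + dr * uq))
      (at (t, q) within {0..} \<times> UNIV) \<and> ut - c * uq = 0)"
    and t: "t \<ge> 0"
  shows "u t q = u 0 (q + c * t)"
proof -
  define w where "w s = u s (q + c * t - c * s)" for s
  have "(w has_derivative (\<lambda>h. 0)) (at s within {0..})" if s: "s \<in> {0..}" for s
  proof -
    define g where "g s = (s, q + c * t - c * s)" for s :: real
    obtain ut uq where D: "((\<lambda>(s, r). u s r) has_derivative (\<lambda>(ds, dr). ds * ut + dr * uq))
        (at (g s) within {0..} \<times> UNIV)" and z: "ut - c * uq = 0"
      using u s unfolding g_def by fastforce
    have "(g has_derivative (\<lambda>h. (h, - c * h))) (at s within {0..})" unfolding g_def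
      by (auto intro!: derivative_eq_intros)
    from has_derivative_in_compose[OF this has_derivative_subset[OF D]]
    have "((\<lambda>s. (\<lambda>(s, r). u s r) (g s)) has_derivative (\<lambda>h. h * (ut - c * uq))) (at s within {0..})"
      by (auto simp: g_def algebra_simps)
    then show ?thesis using z unfolding w_def g_def by simp
  qed
  then obtain C where "\<forall>s\<in>{0..}. w s = C" using has_derivative_zero_constant[of "{0..}" w] by auto
  then have "w t = w 0" using t by auto
  then show ?thesis unfolding w_def by simp
qed

definition chiK_pullback :: "real \<Rightarrow> (real \<Rightarrow> real \<Rightarrow> real) \<Rightarrow> real \<times> real \<Rightarrow> real" where
  "chiK_pullback e f p = f (x_of e p) (v_of p)"

definition Y_weight :: "real \<Rightarrow> real \<times> real \<Rightarrow> real" where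
  "Y_weight e p = 1 + (\<bar>partial_K e (x_of e) p\<bar> + \<bar>partial_K e v_of p\<bar>)
    + (\<bar>partial_K e (x_of e) p\<bar> + \<bar>partial_K e v_of p\<bar>)^2
    + \<bar>partial_K e (partial_K e (x_of e)) p\<bar> + \<bar>partial_K e (partial_K e v_of) p\<bar>"

context
  fixes e :: real
  assumes e: "e > 0"
begin

lemma C1_on_chiK_pullback:
  "C1_on UNIV (case_prod f) \<Longrightarrow> C1_on half_plane (chiK_pullback e f)"
  unfolding chiK_pullback_def[abs_def]
  using C1_on_compose(1)[of UNIV "case_prod f" half_plane "x_of e" "v_of"]
    C2_on_imp_C1_on(1)[OF C2_on_x_of[OF e]] C2_on_imp_C1_on(1)[OF C2_on_v_of] by simp

lemma C2_on_chiK_pullback: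
  "smooth2 f \<Longrightarrow> C2_on half_plane (chiK_pullback e f)"
  unfolding chiK_pullback_def[abs_def]
  using C2_on_compose[OF open_half_plane smooth2_C2_on(1) C2_on_x_of[OF e] C2_on_v_of, of f] by simp

lemma partial_K_chiK_pullback:
  assumes "C1_on UNIV (case_prod f)" "case_prod f differentiable_on UNIV" "p \<in> half_plane"
  shows "partial_K e (chiK_pullback e f) p = chiK_pullback e (pdx f) p * partial_K e (x_of e) p
    + chiK_pullback e (pdv f) p * partial_K e v_of p"
  using partial_K_compose[OF e assms(1) C2_on_imp_C1_on(1)[OF C2_on_x_of[OF e]]
      C2_on_imp_C1_on(1)[OF C2_on_v_of] assms(3)]
  unfolding chiK_pullback_def[abs_def] partials_case_prod(1,2)[OF assms(2)] by simp

lemma partial_K_partial_K_chiK_pullback: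
  assumes f: "smooth2 f" and p: "p \<in> half_plane"
  defines "u \<equiv> partial_K e (x_of e)" and "w \<equiv> partial_K e v_of"
  shows "partial_K e (partial_K e (chiK_pullback e f)) p =
    (chiK_pullback e (pdx (pdx f)) p * u p + chiK_pullback e (pdv (pdx f)) p * w p) * u p
    + (chiK_pullback e (pdx (pdv f)) p * u p + chiK_pullback e (pdv (pdv f)) p * w p) * w p
    + (chiK_pullback e (pdx f) p * partial_K e u p + chiK_pullback e (pdv f) p * partial_K e w p)"
proof -
  note d = smooth2_differentiable_on_partials[OF f] and C = smooth2_C2_on[OF f]
  define A where "A = chiK_pullback e (pdx f)"
  define B where "B = chiK_pullback e (pdv f)"
  have AB: "C1_on half_plane A" "C1_on half_plane B"
    unfolding A_def B_def using C1_on_chiK_pullback[OF C(2)] C1_on_chiK_pullback[OF C(3)] .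
  have uw: "C1_on half_plane u" "C1_on half_plane w"
    unfolding u_def w_def using C1_on_partial_K[OF e C2_on_x_of[OF e]] C1_on_partial_K[OF e C2_on_v_of] .
  have "partial_K e (partial_K e (chiK_pullback e f)) p = partial_K e (\<lambda>p. A p * u p + B p * w p) p"
    by (rule partial_K_cong[OF e _ p])
       (simp add: partial_K_chiK_pullback[OF C2_on_imp_C1_on(1)[OF C(1)] d(1)] A_def B_def u_def w_def)
  also have "\<dots> = (partial_K e A p * u p + A p * partial_K e u p) + (partial_K e B p * w p + B p * partial_K e w p)"
    using partial_K_add[OF e C1_on_mult(1)[OF AB(1) uw(1)] C1_on_mult(1)[OF AB(2) uw(2)] p]
      partial_K_mult[OF e AB(1) uw(1) p] partial_K_mult[OF e AB(2) uw(2) p] by simp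
  also have "partial_K e A p = chiK_pullback e (pdx (pdx f)) p * u p + chiK_pullback e (pdv (pdx f)) p * w p"
    unfolding A_def u_def w_def using partial_K_chiK_pullback[OF C(2) d(2) p] .
  also have "partial_K e B p = chiK_pullback e (pdx (pdv f)) p * u p + chiK_pullback e (pdv (pdv f)) p * w p"
    unfolding B_def u_def w_def using partial_K_chiK_pullback[OF C(3) d(3) p] .
  finally show ?thesis unfolding A_def B_def by (simp add: algebra_simps)
qed

lemma chiK_pullback_Y_bound:
  assumes f: "smooth2 f" and p: "p \<in> half_plane"
    and M: "\<forall>x v. (\<Sum>(a, b) \<in> {(a, b). a + b \<le> (2::nat)}. \<bar>(pdx ^^ a) ((pdv ^^ b) f) x v\<bar>) \<le> M"
  shows "\<bar>chiK_pullback e f p\<bar> + \<bar>partial_K e (chiK_pullback e f) p\<bar>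
    + \<bar>partial_K e (partial_K e (chiK_pullback e f)) p\<bar> \<le> M * Y_weight e p"
proof -
  define x v where "x = x_of e p" and "v = v_of p"
  define u w where "u = partial_K e (x_of e) p" and "w = partial_K e v_of p"
  define u' w' where "u' = partial_K e (partial_K e (x_of e)) p" and "w' = partial_K e (partial_K e v_of) p"
  note B = derivative_bounds[OF M, of x v]
  note d = smooth2_differentiable_on_partials[OF f] and C = smooth2_C2_on[OF f]
  have "\<bar>partial_K e (chiK_pullback e f) p\<bar> = \<bar>pdx f x v * u + pdv f x v * w\<bar>"
    using partial_K_chiK_pullback[OF C2_on_imp_C1_on(1)[OF C(1)] d(1) p]
    unfolding chiK_pullback_def x_def v_def u_def w_def by simp
  also have "\<dots> \<le> M * (\<bar>u\<bar> + \<bar>w\<bar>)" using B(2,3) by (rule abs_lincomb_le)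
  finally have 1: "\<bar>partial_K e (chiK_pullback e f) p\<bar> \<le> M * (\<bar>u\<bar> + \<bar>w\<bar>)" .
  have X: "\<bar>pdx (pdx f) x v * u + pdx (pdv f) x v * w\<bar> \<le> M * (\<bar>u\<bar> + \<bar>w\<bar>)"
    using B(4,5) by (rule abs_lincomb_le)
  have V: "\<bar>pdx (pdv f) x v * u + pdv (pdv f) x v * w\<bar> \<le> M * (\<bar>u\<bar> + \<bar>w\<bar>)"
    using B(5,6) by (rule abs_lincomb_le)
  have "\<bar>partial_K e (partial_K e (chiK_pullback e f)) p\<bar>
      = \<bar>(pdx (pdx f) x v * u + pdx (pdv f) x v * w) * u + (pdx (pdv f) x v * u + pdv (pdv f) x v * w) * w
         + (pdx f x v * u' + pdv f x v * w')\<bar>"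
    using partial_K_partial_K_chiK_pullback[OF f p] smooth2_pdv_pdx_commute[OF f]
    unfolding chiK_pullback_def x_def v_def u_def w_def u'_def w'_def by simp
  also have "\<dots> \<le> \<bar>(pdx (pdx f) x v * u + pdx (pdv f) x v * w) * u + (pdx (pdv f) x v * u + pdv (pdv f) x v * w) * w\<bar>
      + \<bar>pdx f x v * u' + pdv f x v * w'\<bar>"
    by (rule abs_triangle_ineq)
  also have "\<dots> \<le> M * (\<bar>u\<bar> + \<bar>w\<bar>) * (\<bar>u\<bar> + \<bar>w\<bar>) + M * (\<bar>u'\<bar> + \<bar>w'\<bar>)"
    by (rule add_mono[OF abs_lincomb_le[OF X V] abs_lincomb_le[OF B(2,3)]])
  finally have 2: "\<bar>partial_K e (partial_K e (chiK_pullback e f)) p\<bar>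
      \<le> M * (\<bar>u\<bar> + \<bar>w\<bar>) * (\<bar>u\<bar> + \<bar>w\<bar>) + M * (\<bar>u'\<bar> + \<bar>w'\<bar>)" .
  have 0: "\<bar>chiK_pullback e f p\<bar> \<le> M" unfolding chiK_pullback_def using B(1) by (simp add: x_def v_def)
  have "M * Y_weight e p = M + M * (\<bar>u\<bar> + \<bar>w\<bar>) + M * (\<bar>u\<bar> + \<bar>w\<bar>) * (\<bar>u\<bar> + \<bar>w\<bar>) + M * (\<bar>u'\<bar> + \<bar>w'\<bar>)"
    unfolding Y_weight_def u_def w_def u'_def w'_def by (simp add: algebra_simps power2_eq_square)
  then show ?thesis using 0 1 2 by linarith
qed

lemma continuous_on_Y_weight: "continuous_on half_plane (Y_weight e)"
proof -
  have "continuous_on half_plane (partial_K e (x_of e))" "continuous_on half_plane (partial_K e v_of)"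
    "continuous_on half_plane (partial_K e (partial_K e (x_of e)))"
    "continuous_on half_plane (partial_K e (partial_K e v_of))"
    using continuous_on_partial_K[OF e C2_on_imp_C1_on(1)[OF C2_on_x_of[OF e]]]
      continuous_on_partial_K[OF e C2_on_imp_C1_on(1)[OF C2_on_v_of]]
      continuous_on_partial_K[OF e C1_on_partial_K[OF e C2_on_x_of[OF e]]]
      continuous_on_partial_K[OF e C1_on_partial_K[OF e C2_on_v_of]] .
  then show ?thesis unfolding Y_weight_def[abs_def] by (intro continuous_intros)
qed

lemma chi_periodic_Y_weight: "chi_periodic (Y_weight e)"
proof -
  have x: "C1_on half_plane (x_of e)" "C1_on half_plane (partial_K e (x_of e))"
    using C2_on_imp_C1_on(1)[OF C2_on_x_of[OF e]] C1_on_partial_K[OF e C2_on_x_of[OF e]] .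
  have v: "C1_on half_plane v_of" "C1_on half_plane (partial_K e v_of)"
    using C2_on_imp_C1_on(1)[OF C2_on_v_of] C1_on_partial_K[OF e C2_on_v_of] .
  have px: "chi_periodic (partial_K e (x_of e))"
    using chi_periodic_partial_K[OF e x(1) chi_periodic_x_of_v_of(1)] .
  have pv: "chi_periodic (partial_K e v_of)"
    using chi_periodic_partial_K[OF e v(1) chi_periodic_x_of_v_of(2)] .
  have "chi_periodic (partial_K e (partial_K e (x_of e)))" "chi_periodic (partial_K e (partial_K e v_of))"
    using chi_periodic_partial_K[OF e x(2) px] chi_periodic_partial_K[OF e v(2) pv] .
  with px pv show ?thesis unfolding chi_periodic_def Y_weight_def by simp
qed

lemma Y_weight_bounded:
  assumes cs: "cs > 0"
  obtains B where "\<And>c k. cs \<le> k \<Longrightarrow> k \<le> 1 / cs \<Longrightarrow> Y_weight e (c, k) \<le> B"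
proof -
  define R where "R = {0..2 * pi} \<times> {cs..1 / cs}"
  have "R \<subseteq> half_plane" unfolding R_def half_plane_def using cs by auto
  then have "compact (Y_weight e ` R)"
    unfolding R_def
    by (intro compact_continuous_image continuous_on_subset[OF continuous_on_Y_weight] compact_Times compact_Icc)
  then have "bounded (Y_weight e ` R)" by (rule compact_imp_bounded)
  then obtain B where bound: "\<forall>y \<in> Y_weight e ` R. norm y \<le> B"
    unfolding bounded_iff by (elim exE)
  have B: "Y_weight e p \<le> B" if "p \<in> R" for p
    using bound that abs_le_D1 by auto
  show ?thesis
  proof (rule that)
    fix c k assume k: "cs \<le> k" "k \<le> 1 / cs"
    obtain m :: int where m: "0 \<le> c + 2 * pi * of_int m" "c + 2 * pi * of_int m < 0 + 2 * pi"
      using period_representative[of "2 * pi" 0 c] by auto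
    have "k > 0" using cs k(1) by linarith
    then have "Y_weight e (c, k) = Y_weight e (c + 2 * pi * of_int m, k)"
      using chi_periodic_int_shift[OF chi_periodic_Y_weight] by simp
    also have "\<dots> \<le> B" using B m k unfolding R_def by simp
    finally show "Y_weight e (c, k) \<le> B" .
  qed
qed

lemma initial_data_chiK:
  assumes k: "k > 0"
    and per: "\<forall>t q k. fbar t (q + 2 * pi) k = fbar t q k"
    and init: "\<forall>x v. (x, v) \<noteq> (0, 0) \<longrightarrow> f0 x v = fbar 0 (Qxv e x v) (Ham e x v)"
  shows "fbar 0 q k = chiK_pullback e f0 (chiK_of_QK e (q, k))"
proof -
  define c where "c = chi_of_Q e q k"
  obtain m :: int where m: "chi e (x_of e (c, k)) (v_of (c, k)) = c + 2 * pi * of_int m"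
    using chi_x_of_v_of[OF e k] by blast
  have "chiK_of_QK e (q, k) = (c, k)" unfolding chiK_of_QK_def c_def by simp
  then have "chiK_pullback e f0 (chiK_of_QK e (q, k)) = fbar 0 (Qxv e (x_of e (c, k)) (v_of (c, k))) k"
    unfolding chiK_pullback_def using init x_of_v_of_nonzero[OF e k] Ham_x_of_v_of[OF e k] by simp
  also have "Qxv e (x_of e (c, k)) (v_of (c, k)) = Q_of e (c + 2 * pi * of_int m, k)"
    unfolding Qxv_def Ham_x_of_v_of[OF e k] m Qfun_eq[OF e k] ..
  also have "\<dots> = q + 2 * pi * of_int m"
    unfolding Q_of_int_shift[OF e k] c_def Q_of_chi_of_Q[OF e k] ..
  also have "fbar 0 (q + 2 * pi * of_int m) k = fbar 0 q k"
    using periodic_int_shift[of "\<lambda>q. fbar 0 q k" "2 * pi"] per by simp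
  finally show ?thesis ..
qed

lemma Y_derivatives_bound:
  assumes cs: "cs > 0" and B: "\<And>c k. cs \<le> k \<Longrightarrow> k \<le> 1 / cs \<Longrightarrow> Y_weight e (c, k) \<le> B"
    and transport: "\<forall>t q k. t \<ge> 0 \<longrightarrow> k > 0 \<longrightarrow>
        (\<exists>ft fq. ((\<lambda>(s, r). fbar s r k) has_derivative (\<lambda>(ds, dr). ds * ft + dr * fq))
                    (at (t, q) within {0..} \<times> UNIV) \<and> ft - cfun e k * fq = 0)"
    and per: "\<forall>t q k. fbar t (q + 2 * pi) k = fbar t q k"
    and init: "\<forall>x v. (x, v) \<noteq> (0, 0) \<longrightarrow> f0 x v = fbar 0 (Qxv e x v) (Ham e x v)"
    and f0: "smooth2 f0"
    and M: "\<forall>x v. (\<Sum>(a, b) \<in> {(a, b). a + b \<le> (2::nat)}. \<bar>(pdx ^^ a) ((pdv ^^ b) f0) x v\<bar>) \<le> M"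
    and t: "t \<ge> 0" and k: "cs \<le> k" "k \<le> 1 / cs"
  shows "(\<Sum>l\<le>(2::nat). \<bar>((Yop e) ^^ l) fbar t q k\<bar>) \<le> B * M"
proof -
  define G where "G = chiK_pullback e f0"
  define p where "p = chiK_of_QK e (q + cfun e k * t, k)"
  have k0: "k > 0" using cs k(1) by linarith
  have p: "p \<in> half_plane" unfolding p_def using chiK_of_QK_half_plane[OF k0] .
  have G: "C2_on half_plane G" unfolding G_def using C2_on_chiK_pullback[OF f0] .
  have dG: "C1_on half_plane (partial_K e G)" using C1_on_partial_K[OF e G] .
  have Y0: "fbar t q k = G (chiK_of_QK e (q + cfun e k * t, k))" if "k > 0" for q k
    using transport_solution[of "\<lambda>s r. fbar s r k" "cfun e k", OF _ t] transport that
      initial_data_chiK[OF that per init] unfolding G_def by auto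
  have Y1: "Yop e fbar t q k = - partial_K e G (chiK_of_QK e (q + cfun e k * t, k))" if "k > 0" for q k
    using Yop_transported[where h=fbar, OF e C2_on_imp_C1_on(1)[OF G] Y0 that] .
  have Y2: "Yop e (Yop e fbar) t q k = partial_K e (partial_K e G) p"
    using Yop_transported[where h="Yop e fbar", OF e C1_on_uminus(1)[OF dG] Y1 k0]
      partial_K_uminus[OF e dG p] unfolding p_def by simp
  have "(\<Sum>l\<le>(2::nat). \<bar>((Yop e) ^^ l) fbar t q k\<bar>)
      = \<bar>fbar t q k\<bar> + \<bar>Yop e fbar t q k\<bar> + \<bar>Yop e (Yop e fbar) t q k\<bar>"
    by (simp add: numeral_2_eq_2)
  also have "\<dots> \<le> M * Y_weight e p"
    unfolding Y0[OF k0] Y1[OF k0] Y2 G_def abs_minus_cancel p_def[symmetric]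
    using chiK_pullback_Y_bound[OF f0 p M] .
  also have "\<dots> \<le> M * B"
    using B[OF k] derivative_bounds(1)[OF M, of 0 0] unfolding p_def chiK_of_QK_def
    by (intro mult_left_mono) simp_all
  finally show ?thesis by (simp add: mult.commute)
qed

end

theorem lemma4p2:
  fixes eps cs :: real
  assumes "eps > 0" and "cs > 0"
  shows "\<exists>C::real. \<forall>(fbar :: real \<Rightarrow> real \<Rightarrow> real \<Rightarrow> real) (f0 :: real \<Rightarrow> real \<Rightarrow> real) (M :: real).
    ((\<forall>t q k. t \<ge> 0 \<longrightarrow> k > 0 \<longrightarrow>
        (\<exists>ft fq. ((\<lambda>(s, r). fbar s r k) has_derivative (\<lambda>(ds, dr). ds * ft + dr * fq))
                    (at (t, q) within {0..} \<times> UNIV)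
                 \<and> ft - cfun eps k * fq = 0))
     \<and> (\<forall>t q k. fbar t (q + 2 * pi) k = fbar t q k)
     \<and> (\<forall>x v. (x, v) \<noteq> (0, 0) \<longrightarrow> f0 x v = fbar 0 (Qxv eps x v) (Ham eps x v))
     \<and> smooth2 f0
     \<and> (\<forall>x v. f0 x v \<ge> 0)
     \<and> closure {(x, v). f0 x v \<noteq> 0} \<subseteq> {(x, v). cs \<le> Ham eps x v \<and> Ham eps x v \<le> 1 / cs}
     \<and> (\<forall>x v. (\<Sum>(a, b) \<in> {(a, b). a + b \<le> (2::nat)}.
               \<bar>(pdx ^^ a) ((pdv ^^ b) f0) x v\<bar>) \<le> M))
    \<longrightarrow> (\<forall>t q k. t \<ge> 0 \<longrightarrow> cs \<le> k \<longrightarrow> k \<le> 1 / cs \<longrightarrow>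
          (\<Sum>l\<le>(2::nat). \<bar>((Yop eps) ^^ l) fbar t q k\<bar>) \<le> C * M)"
proof -
  obtain B where B: "\<And>c k. cs \<le> k \<Longrightarrow> k \<le> 1 / cs \<Longrightarrow> Y_weight eps (c, k) \<le> B"
    using Y_weight_bounded[OF assms] by blast
  show ?thesis
    by (intro exI[of _ B] allI impI, elim conjE) (rule Y_derivatives_bound[OF assms B]; assumption)
qed

end
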